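(* Assume (A1)–(A3). Let $u\in USC(\overline{Q_T})$ be a viscosity subsolution and $v\in LSC(\overline{Q_T})$ a viscosity supersolution of $\partial_t^\alpha u+H(t,x,u,Du)=0$ in $Q_T$. If $u(0,\cdot)\le v(0,\cdot)$ on $\mathbb{T}^d$, then $u\le v$ on $\overline{Q_T}$.
   Context: Fix $d\ge1$, $T>0$, $\alpha\in(0,1)$. $\mathbb{T}^d=\mathbb{R}^d/\mathbb{Z}^d$; functions on $[0,T]\times\mathbb{T}^d$ are identified with functions on $[0,T]\times\mathbb{R}^d$ $\mathbb{Z}^d$-periodic in $x$. $Q_T=(0,T]\times\mathbb{T}^d$, $\overline{Q_T}=[0,T]\times\mathbb{T}^d$; $D$ spatial gradient; $\partial_t^\alpha$ Caputo's derivative $(\partial_t^\alpha f)(t)=\frac{1}{\Gamma(1-\alpha)}\int_0^t f'(s)(t-s)^{-\alpha}ds$. $H:\overline{Q_T}\times\mathbb{R}\times\mathbb{R}^d\to\mathbb{R}$. Assumptions: (A1) $H$ is continuous. (A2) There is a modulus $\omega:[0,\infty)\to[0,\infty)$ with $|H(t,x,r,p)-H(t,y,r,p)|\le\omega(|x-y|(1+|p|))$ for all $t\in[0,T]$, $x,y\in\mathbb{R}^d$, $r\in\mathbb{R}$, $p\in\mathbb{R}^d$. (A3) $r\mapsto H(t,x,r,p)$ is nondecreasing. $\mathcal{C}^1([a,b]\times O)=\{\phi\in C^1((a,b]\times O)\cap C([a,b]\times O):\partial_t\phi(\cdot,x)\in L^1(a,b)\ \forall x\in O\}$. For measurable $f(t,x)$,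 $t\in(0,T]$, $r\in[0,t]$: $J_r[f](t,x)=\frac{\alpha}{\Gamma(1-\alpha)}\int_0^r (f(t,x)-f(t-\tau,x))\tau^{-\alpha-1}d\tau$, $K_r[f](t,x)=\frac{f(t,x)-f(0,x)}{t^\alpha\Gamma(1-\alpha)}+\frac{\alpha}{\Gamma(1-\alpha)}\int_r^t (f(t,x)-f(t-\tau,x))\tau^{-\alpha-1}d\tau$ (lower limit $0$: improper integral). Viscosity sub/supersolution: $u\in USC(\overline{Q_T})$ (resp. $LSC$) such that for all $a<b$ in $[0,T]$, every open ball $B\subset\mathbb{R}^d$, every $\phi\in\mathcal{C}^1([0,T]\times\mathbb{R}^d)$ and every $(\hat t,\hat x)\in(a,b]\times B$ where $u-\phi$ attains its maximum (resp. minimum) over $[a,b]\times\overline B$: $J_{\hat t-a}[\phi](\hat t,\hat x)+K_{\hat t-a}[u](\hat t,\hat x)+H(\hat t,\hat x,u(\hat t,\hat x),D\phi(\hat t,\hat x))\le0$ (resp. $\ge0$). *)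

theory Defs
  imports "HOL-Analysis.Analysis"
begin

text \<open>Functions on [0,T] x T^d are represented as functions
  real => real^'d => real that are Z^d-periodic in the space variable.\<close>

definition periodic_x :: "(real \<Rightarrow> real^'d \<Rightarrow> 'b) \<Rightarrow> bool" where
  "periodic_x f \<longleftrightarrow> (\<forall>t x z. (\<forall>i. z $ i \<in> \<int>) \<longrightarrow> f t (x + z) = f t x)"

definition usc_on :: "'a::topological_space set \<Rightarrow> ('a \<Rightarrow> real) \<Rightarrow> bool" where
  "usc_on S f \<longleftrightarrow> (\<forall>p\<in>S. \<forall>e>0. \<forall>\<^sub>F q in at p within S. f q < f p + e)"

definition lsc_on :: "'a::topological_space set \<Rightarrow> ('a \<Rightarrow> real) \<Rightarrow> bool" where
  "lsc_on S f \<longleftrightarrow> (\<forall>p\<in>S. \<forall>e>0. \<forall>\<^sub>F q in at p within S. f p - e < f q)"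

definition is_modulus :: "(real \<Rightarrow> real) \<Rightarrow> bool" where
  "is_modulus \<omega> \<longleftrightarrow> (\<forall>r\<ge>0. 0 \<le> \<omega> r) \<and> mono_on {0..} \<omega> \<and> \<omega> 0 = 0
     \<and> (\<omega> \<longlongrightarrow> 0) (at_right 0)"

definition C1_test :: "real \<Rightarrow> (real \<Rightarrow> real^'d \<Rightarrow> real) \<Rightarrow> (real \<Rightarrow> real^'d \<Rightarrow> real)
     \<Rightarrow> (real \<Rightarrow> real^'d \<Rightarrow> real^'d) \<Rightarrow> bool" where
  "C1_test T \<phi> \<phi>t D\<phi> \<longleftrightarrow>
     continuous_on ({0..T} \<times> UNIV) (\<lambda>p. \<phi> (fst p) (snd p)) \<and>
     (\<forall>t\<in>{0<..T}. \<forall>x. ((\<lambda>p. \<phi> (fst p) (snd p)) has_derivative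
         (\<lambda>h. fst h * \<phi>t t x + D\<phi> t x \<bullet> snd h)) (at (t, x) within {0<..T} \<times> UNIV)) \<and>
     continuous_on ({0<..T} \<times> UNIV) (\<lambda>p. \<phi>t (fst p) (snd p)) \<and>
     continuous_on ({0<..T} \<times> UNIV) (\<lambda>p. D\<phi> (fst p) (snd p)) \<and>
     (\<forall>x. set_integrable lborel {0<..<T} (\<lambda>t. \<phi>t t x))"

definition eint :: "real set \<Rightarrow> (real \<Rightarrow> real) \<Rightarrow> ereal" where
  "eint S g = enn2ereal (\<integral>\<^sup>+ \<tau>\<in>S. ennreal (g \<tau>) \<partial>lborel)
            - enn2ereal (\<integral>\<^sup>+ \<tau>\<in>S. ennreal (- g \<tau>) \<partial>lborel)"

definition J_op :: "real \<Rightarrow> real \<Rightarrow> (real \<Rightarrow> real^'d \<Rightarrow> real) \<Rightarrow> real \<Rightarrow> real^'d \<Rightarrow> real" where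
  "J_op \<alpha> r f t x = \<alpha> / Gamma (1 - \<alpha>) *
     (LINT \<tau>:{0<..<r}|lborel. (f t x - f (t - \<tau>) x) * \<tau> powr (- \<alpha> - 1))"

definition K_op :: "real \<Rightarrow> real \<Rightarrow> (real \<Rightarrow> real^'d \<Rightarrow> real) \<Rightarrow> real \<Rightarrow> real^'d \<Rightarrow> ereal" where
  "K_op \<alpha> r f t x = ereal ((f t x - f 0 x) / (t powr \<alpha> * Gamma (1 - \<alpha>)))
     + ereal (\<alpha> / Gamma (1 - \<alpha>)) * eint {r..t} (\<lambda>\<tau>. (f t x - f (t - \<tau>) x) * \<tau> powr (- \<alpha> - 1))"

definition visc_sub :: "real \<Rightarrow> real \<Rightarrow> (real \<Rightarrow> real^'d \<Rightarrow> real \<Rightarrow> real^'d \<Rightarrow> real)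
     \<Rightarrow> (real \<Rightarrow> real^'d \<Rightarrow> real) \<Rightarrow> bool" where
  "visc_sub \<alpha> T H u \<longleftrightarrow>
     usc_on ({0..T} \<times> UNIV) (\<lambda>p. u (fst p) (snd p)) \<and>
     (\<forall>a b c \<rho> \<phi> \<phi>t D\<phi> t x. 0 \<le> a \<and> a < b \<and> b \<le> T \<and> 0 < \<rho> \<and> C1_test T \<phi> \<phi>t D\<phi>
        \<and> t \<in> {a<..b} \<and> x \<in> ball c \<rho>
        \<and> (\<forall>s\<in>{a..b}. \<forall>y\<in>cball c \<rho>. u s y - \<phi> s y \<le> u t x - \<phi> t x)
      \<longrightarrow> ereal (J_op \<alpha> (t - a) \<phi> t x) + K_op \<alpha> (t - a) u t x
            + ereal (H t x (u t x) (D\<phi> t x)) \<le> 0)"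

definition visc_super :: "real \<Rightarrow> real \<Rightarrow> (real \<Rightarrow> real^'d \<Rightarrow> real \<Rightarrow> real^'d \<Rightarrow> real)
     \<Rightarrow> (real \<Rightarrow> real^'d \<Rightarrow> real) \<Rightarrow> bool" where
  "visc_super \<alpha> T H v \<longleftrightarrow>
     lsc_on ({0..T} \<times> UNIV) (\<lambda>p. v (fst p) (snd p)) \<and>
     (\<forall>a b c \<rho> \<phi> \<phi>t D\<phi> t x. 0 \<le> a \<and> a < b \<and> b \<le> T \<and> 0 < \<rho> \<and> C1_test T \<phi> \<phi>t D\<phi>
        \<and> t \<in> {a<..b} \<and> x \<in> ball c \<rho>
        \<and> (\<forall>s\<in>{a..b}. \<forall>y\<in>cball c \<rho>. v t x - \<phi> t x \<le> v s y - \<phi> s y)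
      \<longrightarrow> ereal (J_op \<alpha> (t - a) \<phi> t x) + K_op \<alpha> (t - a) v t x
            + ereal (H t x (v t x) (D\<phi> t x)) \<ge> 0)"

end

theory Submission
  imports Defs
begin

text \<open>
  Doubling of variables. Suppose \<open>u - v\<close> had a positive maximum \<open>\<theta>\<close>. Maximize
  \<open>u(t,x) - v(s,y) - |x - y|^2/(2\<epsilon>) - (t - s)^2/(2\<delta>)\<close>; by periodicity a maximizer exists.
  The two quadratics touching \<open>u\<close> from above at \<open>(t,x)\<close> and \<open>v\<close> from below at \<open>(s,y)\<close> share the
  spatial gradient \<open>p = (x - y)/\<epsilon>\<close>. Subtracting the two viscosity inequalities, the nonlocal terms of
  the smooth test functions are \<open>O(r^(1-\<alpha>))\<close> and vanish as the splitting radius \<open>r \<rightarrow> 0\<close>; maximality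
  under the joint time shift \<open>(t, s) \<mapsto> (t - \<tau>, s - \<tau>)\<close> lets the memory integral of \<open>u\<close> dominate
  that of \<open>v\<close> up to the mismatch of their ranges; and the remaining Caputo terms are at least
  \<open>\<theta> t^(-\<alpha>) / \<Gamma>(1-\<alpha>)\<close> up to errors. The Hamiltonian terms are controlled by monotonicity in \<open>r\<close>,
  the modulus \<open>\<omega>\<close> in \<open>x\<close> and uniform continuity in \<open>t\<close>. Along a convergent subsequence of
  maximizers with \<open>\<epsilon>, \<delta> \<rightarrow> 0\<close> the limit time is positive because \<open>u \<le> v\<close> at \<open>t = 0\<close>, all error
  terms vanish, and \<open>\<theta> > 0\<close> is contradicted.
\<close>

section \<open>Semicontinuity and periodicity\<close>

lemma usc_on_metric:
  fixes f :: "'a::metric_space \<Rightarrow> real"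
  shows "usc_on S f \<longleftrightarrow> (\<forall>p\<in>S. \<forall>e>0. \<exists>d>0. \<forall>q\<in>S. dist q p < d \<longrightarrow> f q < f p + e)"
  unfolding usc_on_def eventually_at by (metis less_add_same_cancel1)

lemma lsc_on_iff_usc_on_uminus: "lsc_on S f \<longleftrightarrow> usc_on S (\<lambda>p. - f p)"
proof -
  have "f p - e < f q \<longleftrightarrow> - f q < - f p + e" for p q and e :: real by linarith
  then show ?thesis unfolding lsc_on_def usc_on_def by simp
qed

lemma usc_on_subset: "usc_on S f \<Longrightarrow> K \<subseteq> S \<Longrightarrow> usc_on K f"
  unfolding usc_on_def by (meson at_le filter_leD subsetD)

lemma continuous_on_imp_usc_on: "continuous_on S f \<Longrightarrow> usc_on S f"
  unfolding usc_on_def continuous_on_def by (auto intro: order_tendstoD(2))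

lemma usc_on_add:
  assumes "usc_on S f" "usc_on S g" shows "usc_on S (\<lambda>p. f p + g p)"
  unfolding usc_on_def
proof (intro ballI allI impI)
  fix p and e :: real assume "p \<in> S" "e > 0"
  then have "e/2 > 0" by simp
  with \<open>p \<in> S\<close> have "\<forall>\<^sub>F q in at p within S. f q < f p + e/2" "\<forall>\<^sub>F q in at p within S. g q < g p + e/2"
    using assms unfolding usc_on_def by blast+
  then show "\<forall>\<^sub>F q in at p within S. f q + g q < f p + g p + e"
    by eventually_elim simp
qed

lemma usc_on_compose:
  fixes f :: "'b::metric_space \<Rightarrow> real" and g :: "'a::metric_space \<Rightarrow> 'b"
  assumes f: "usc_on S f" and g: "continuous_on K g" "g ` K \<subseteq> S"
  shows "usc_on K (\<lambda>q. f (g q))"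
  unfolding usc_on_metric
proof (intro ballI allI impI)
  fix p and e :: real assume p: "p \<in> K" and e: "e > 0"
  obtain d where d: "d > 0" "\<forall>y\<in>S. dist y (g p) < d \<longrightarrow> f y < f (g p) + e"
    using f p e g(2) unfolding usc_on_metric by blast
  obtain d' where "d' > 0" "\<forall>q\<in>K. dist q p < d' \<longrightarrow> dist (g q) (g p) < d"
    using g(1) p d(1) unfolding continuous_on_iff by blast
  then show "\<exists>d>0. \<forall>q\<in>K. dist q p < d \<longrightarrow> f (g q) < f (g p) + e"
    using d g(2) by blast
qed

lemma usc_on_attains_max:
  fixes f :: "'a::metric_space \<Rightarrow> real"
  assumes K: "compact K" "K \<noteq> {}" and f: "usc_on K f"
  shows "\<exists>p\<in>K. \<forall>q\<in>K. f q \<le> f p"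
proof (rule ccontr)
  assume "\<not> ?thesis"
  then obtain g where g: "\<And>p. p \<in> K \<Longrightarrow> g p \<in> K \<and> f p < f (g p)"
    by (metis not_le)
  have "\<forall>p\<in>K. \<exists>d>0. \<forall>q\<in>K. dist q p < d \<longrightarrow> f q < f (g p)"
  proof
    fix p assume p: "p \<in> K"
    then have "f (g p) - f p > 0" using g by simp
    with f p show "\<exists>d>0. \<forall>q\<in>K. dist q p < d \<longrightarrow> f q < f (g p)"
      unfolding usc_on_metric by (metis add.commute diff_add_cancel)
  qed
  then obtain d where d: "\<And>p. p \<in> K \<Longrightarrow> d p > 0 \<and> (\<forall>q\<in>K. dist q p < d p \<longrightarrow> f q < f (g p))"
    by metis
  have "K \<subseteq> (\<Union>p\<in>K. ball p (d p))" using d by force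
  then obtain F where F: "F \<subseteq> K" "finite F" "K \<subseteq> (\<Union>p\<in>F. ball p (d p))"
    using compactE_image[OF K(1), of K "\<lambda>p. ball p (d p)"] by blast
  then have "F \<noteq> {}" using K(2) by auto
  then have "Max (f ` g ` F) \<in> f ` g ` F" using F(2) by simp
  then obtain m where m: "m \<in> g ` F" "f m = Max (f ` g ` F)" by (metis imageE)
  then have m_max: "\<forall>q\<in>g ` F. f q \<le> f m" using F(2) by simp
  have "m \<in> K" using m(1) F(1) g by auto
  then obtain p where p: "p \<in> F" "dist m p < d p"
    using F(3) by (auto simp: dist_commute)
  then have "f m < f (g p)" using d[of p] F(1) \<open>m \<in> K\<close> by auto
  with m_max p show False by fastforce
qed

lemma usc_on_sequentially:
  fixes f :: "'a::metric_space \<Rightarrow> real"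
  assumes "usc_on S f" "p \<in> S" "\<And>n. q n \<in> S" "q \<longlonglongrightarrow> p" "e > 0"
  shows "\<forall>\<^sub>F n in sequentially. f (q n) < f p + e"
proof -
  obtain d where d: "d > 0" "\<forall>y\<in>S. dist y p < d \<longrightarrow> f y < f p + e"
    using assms unfolding usc_on_metric by blast
  have "\<forall>\<^sub>F n in sequentially. dist (q n) p < d" using assms(4) d(1) by (rule tendstoD)
  then show ?thesis by eventually_elim (use d assms(3) in auto)
qed

lemma periodic_x_diff: "periodic_x f \<Longrightarrow> \<forall>i. z$i \<in> \<int> \<Longrightarrow> f t (x - z) = f t x"
  unfolding periodic_x_def by (metis diff_add_cancel)

lemma unit_cube_representative:
  fixes x :: "real^'d"
  shows "\<exists>z. (\<forall>i. z$i \<in> \<int>) \<and> x - z \<in> cbox 0 1"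
proof (intro exI conjI allI)
  let ?z = "(\<chi> i. of_int \<lfloor>x$i\<rfloor>) :: real^'d"
  show "?z $ i \<in> \<int>" for i by simp
  show "x - ?z \<in> cbox 0 1"
    unfolding mem_box_cart by (simp add: of_int_floor_le) linarith
qed

lemma norm_le_card_unit_cube:
  fixes x :: "real^'d"
  assumes "x \<in> cbox 0 1"
  shows "norm x \<le> CARD('d)"
proof -
  have "norm x \<le> (\<Sum>i\<in>UNIV. \<bar>x$i\<bar>)" by (rule norm_le_l1_cart)
  also have "\<dots> \<le> (\<Sum>i\<in>(UNIV::'d set). 1)"
    using assms by (intro sum_mono) (simp add: mem_box_cart)
  finally show ?thesis by simp
qed

lemma periodic_usc_attains_max:
  fixes f :: "real \<Rightarrow> real^'d \<Rightarrow> real"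
  assumes usc: "usc_on ({0..T} \<times> UNIV) (\<lambda>p. f (fst p) (snd p))" and per: "periodic_x f"
    and T: "0 \<le> T"
  shows "\<exists>t0\<in>{0..T}. \<exists>x0\<in>cbox 0 1. \<forall>t\<in>{0..T}. \<forall>x. f t x \<le> f t0 x0"
proof -
  have "(0, 0) \<in> {0..T} \<times> cbox (0::real^'d) 1" using T by (simp add: mem_box_cart)
  then have "compact ({0..T} \<times> cbox (0::real^'d) 1)" "{0..T} \<times> cbox (0::real^'d) 1 \<noteq> {}"
    by (auto intro!: compact_Times)
  moreover have "usc_on ({0..T} \<times> cbox 0 1) (\<lambda>p. f (fst p) (snd p))"
    using usc by (rule usc_on_subset) auto
  ultimately obtain p where p: "p \<in> {0..T} \<times> cbox 0 1"
    "\<forall>q\<in>{0..T} \<times> cbox 0 1. f (fst q) (snd q) \<le> f (fst p) (snd p)"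
    using usc_on_attains_max by blast
  have "f t x \<le> f (fst p) (snd p)" if "t \<in> {0..T}" for t x
  proof -
    obtain z where "\<forall>i. z$i \<in> \<int>" "x - z \<in> cbox 0 1" using unit_cube_representative by blast
    then show ?thesis using p(2) that periodic_x_diff[OF per] by force
  qed
  with p(1) show ?thesis by (metis mem_Times_iff prod.collapse)
qed

section \<open>Caputo-type integrals\<close>

lemma set_integral_powr_from_0:
  fixes \<alpha> r :: real
  assumes a: "0 < \<alpha>" "\<alpha> < 1" and r: "r \<ge> 0"
  shows "set_integrable lborel {0..r} (\<lambda>\<tau>. \<tau> powr (-\<alpha>))"
    "(LINT \<tau>:{0..r}|lborel. \<tau> powr (-\<alpha>)) = r powr (1-\<alpha>) / (1-\<alpha>)"
proof -
  have hi: "((\<lambda>x. x powr (-\<alpha>)) has_integral (r powr (-\<alpha>+1) / (-\<alpha>+1))) {0..r}"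
    using has_integral_powr_from_0[of "-\<alpha>" r] a r by simp
  hence "(\<lambda>x. x powr (-\<alpha>)) absolutely_integrable_on {0..r}"
    by (intro nonnegative_absolutely_integrable_1) (auto simp: integrable_on_def)
  moreover have "(\<lambda>\<tau>. indicator {0..r} \<tau> *\<^sub>R (\<tau> powr (-\<alpha>))) \<in> borel_measurable lborel"
    by measurable
  ultimately show si: "set_integrable lborel {0..r} (\<lambda>\<tau>. \<tau> powr (-\<alpha>))"
    unfolding set_integrable_def by (simp add: integrable_completion)
  have "(LINT \<tau>:{0..r}|lborel. \<tau> powr (-\<alpha>)) = integral {0..r} (\<lambda>x. x powr (-\<alpha>))"
    using set_borel_integral_eq_integral(2)[OF si] .
  also have "\<dots> = r powr (1-\<alpha>) / (1-\<alpha>)" using integral_unique[OF hi] by simp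
  finally show "(LINT \<tau>:{0..r}|lborel. \<tau> powr (-\<alpha>)) = r powr (1-\<alpha>) / (1-\<alpha>)" .
qed

lemma abs_set_integral_le_powr:
  fixes \<alpha> r K :: real and F :: "real \<Rightarrow> real"
  assumes a: "0 < \<alpha>" "\<alpha> < 1" and r: "r \<ge> 0" and K: "K \<ge> 0"
    and b: "\<And>\<tau>. \<tau> \<in> {0<..<r} \<Longrightarrow> \<bar>F \<tau>\<bar> \<le> K * \<tau> powr (-\<alpha>)"
  shows "\<bar>LINT \<tau>:{0<..<r}|lborel. F \<tau>\<bar> \<le> K * (r powr (1-\<alpha>) / (1-\<alpha>))"
proof (cases "set_integrable lborel {0<..<r} F")
  case True
  have si: "set_integrable lborel {0..r} (\<lambda>\<tau>. K * \<tau> powr (-\<alpha>))"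
    using set_integral_powr_from_0(1)[OF a r] by (rule set_integrable_mult_right)
  have "norm (LINT \<tau>:{0<..<r}|lborel. F \<tau>) \<le> (LINT \<tau>:{0..r}|lborel. K * \<tau> powr (-\<alpha>))"
    unfolding set_lebesgue_integral_def
    apply (rule Bochner_Integration.integral_norm_bound_integral)
    using True si apply (simp_all add: set_integrable_def)
    subgoal for x using b[of x] K by (auto simp: indicator_def)
    done
  also have "\<dots> = K * (r powr (1-\<alpha>) / (1-\<alpha>))"
    using set_integral_powr_from_0(2)[OF a r] by (simp add: set_integral_mult_right)
  finally show ?thesis by simp
next
  case False
  hence "(LINT \<tau>:{0<..<r}|lborel. F \<tau>) = 0"
    unfolding set_lebesgue_integral_def set_integrable_def by (simp add: not_integrable_integral_eq)
  moreover have "0 \<le> K * (r powr (1-\<alpha>) / (1-\<alpha>))" using K a by simp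
  ultimately show ?thesis by simp
qed


lemma C1_test_quadratic:
  fixes A B s :: real and y :: "real^'d"
  shows "C1_test T (\<lambda>t' x'. A*((x'-y)\<bullet>(x'-y)) + B*(t'-s)^2) (\<lambda>t' x'. 2*B*(t'-s))
           (\<lambda>t' x'. (2*A) *\<^sub>R (x'-y))"
  unfolding C1_test_def
proof (intro conjI ballI allI)
  show "continuous_on ({0..T} \<times> UNIV) (\<lambda>p. A*((snd p-y)\<bullet>(snd p-y)) + B*(fst p-s)^2)"
    by (intro continuous_intros)
  show "continuous_on ({0<..T} \<times> UNIV) (\<lambda>p. 2*B*(fst p - s))"
    by (intro continuous_intros)
  show "continuous_on ({0<..T} \<times> UNIV) (\<lambda>p. (2*A) *\<^sub>R (snd p - y))"
    by (intro continuous_intros)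
  fix x :: "real^'d"
  have "set_integrable lborel {0..T} (\<lambda>t. 2*B*(t-s))"
    by (intro borel_integrable_atLeastAtMost' continuous_intros)
  then show "set_integrable lborel {0<..<T} (\<lambda>t. 2*B*(t-s))"
    by (rule set_integrable_subset) auto
  fix t assume "t \<in> {0<..T}"
  show "((\<lambda>p. A*((snd p-y)\<bullet>(snd p-y)) + B*(fst p-s)^2) has_derivative
         (\<lambda>h. fst h * (2*B*(t-s)) + ((2*A) *\<^sub>R (x-y)) \<bullet> snd h)) (at (t, x) within {0<..T} \<times> UNIV)"
    apply (rule derivative_eq_intros refl | simp)+
    apply (simp add: algebra_simps inner_commute fun_eq_iff)
    done
qed

lemma usc_slice_measurable:
  fixes u :: "real \<Rightarrow> real^'d \<Rightarrow> real"
  assumes usc: "usc_on ({0..T} \<times> UNIV) (\<lambda>p. u (fst p) (snd p))"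
    and ab: "a \<le> b" "0 \<le> t - b" "t - a \<le> T"
  shows "\<exists>G\<in>borel_measurable lborel. \<forall>\<tau>\<in>{a..b}. G \<tau> = u (t - \<tau>) x"
proof -
  define cl where "cl = (\<lambda>\<tau>::real. max a (min b \<tau>))"
  define G where "G = (\<lambda>\<tau>. u (t - cl \<tau>) x)"
  have cl_in: "(t - cl \<tau>, x) \<in> {0..T} \<times> UNIV" for \<tau> using ab by (auto simp: cl_def)
  have cl_lip: "\<bar>cl \<tau> - cl \<tau>'\<bar> \<le> \<bar>\<tau> - \<tau>'\<bar>" for \<tau> \<tau>' by (auto simp: cl_def)
  have op: "open {\<tau>. G \<tau> < c}" for c
    unfolding open_dist
  proof (intro ballI)
    fix \<tau>0 assume "\<tau>0 \<in> {\<tau>. G \<tau> < c}"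
    hence "c - G \<tau>0 > 0" by simp
    from usc[unfolded usc_on_metric, rule_format, OF cl_in[of \<tau>0] this] obtain d where d: "d > 0"
      "\<forall>q\<in>{0..T} \<times> UNIV. dist q (t - cl \<tau>0, x) < d \<longrightarrow> u (fst q) (snd q) < u (t - cl \<tau>0) x + (c - G \<tau>0)"
      by auto
    show "\<exists>e>0. \<forall>y. dist y \<tau>0 < e \<longrightarrow> y \<in> {\<tau>. G \<tau> < c}"
    proof (intro exI[of _ d] conjI allI impI)
      fix y assume "dist y \<tau>0 < d"
      hence "dist (t - cl y, x) (t - cl \<tau>0, x) < d"
        using cl_lip[of y \<tau>0] by (simp add: dist_Pair_Pair dist_real_def)
      with d(2) cl_in[of y] have "u (t - cl y) x < u (t - cl \<tau>0) x + (c - G \<tau>0)" by force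
      thus "y \<in> {\<tau>. G \<tau> < c}" by (simp add: G_def)
    qed (rule d(1))
  qed
  have "G \<in> borel_measurable lborel"
    unfolding borel_measurable_iff_less using op by (auto intro: borel_open)
  moreover have "\<forall>\<tau>\<in>{a..b}. G \<tau> = u (t - \<tau>) x" by (auto simp: G_def cl_def)
  ultimately show ?thesis by blast
qed

definition pos_integral :: "real set \<Rightarrow> (real \<Rightarrow> real) \<Rightarrow> ennreal" where
  "pos_integral S g = (\<integral>\<^sup>+ \<tau>\<in>S. ennreal (g \<tau>) \<partial>lborel)"

lemma eint_pos_integral: "eint S g = enn2ereal (pos_integral S g) - enn2ereal (pos_integral S (\<lambda>\<tau>. - g \<tau>))"
  unfolding eint_def pos_integral_def by simp

lemma pos_integral_mono: "(\<And>\<tau>. \<tau> \<in> S \<Longrightarrow> g \<tau> \<le> h \<tau>) \<Longrightarrow> pos_integral S g \<le> pos_integral S h"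
  unfolding pos_integral_def by (intro nn_integral_mono) (auto simp: indicator_def ennreal_leI)

lemma pos_integral_mono_set: "S \<subseteq> S' \<Longrightarrow> pos_integral S g \<le> pos_integral S' g"
  unfolding pos_integral_def by (intro nn_integral_mono) (auto simp: indicator_def)

lemma eint_mono: assumes h: "\<And>\<tau>. \<tau> \<in> S \<Longrightarrow> g \<tau> \<le> h \<tau>" shows "eint S g \<le> eint S h"
proof -
  have "pos_integral S g \<le> pos_integral S h" by (rule pos_integral_mono) (use h in auto)
  moreover have "pos_integral S (\<lambda>\<tau>. - h \<tau>) \<le> pos_integral S (\<lambda>\<tau>. - g \<tau>)" by (rule pos_integral_mono) (use h in auto)
  ultimately show ?thesis unfolding eint_pos_integral
    by (intro ereal_minus_mono) (simp_all add: less_eq_ennreal.rep_eq)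
qed

lemma pos_integral_extend_le:
  assumes G: "G \<in> borel_measurable lborel" "\<forall>\<tau>\<in>{a..b}. G \<tau> = g \<tau>"
    and C: "\<forall>\<tau>\<in>{b..b'}. g \<tau> \<le> C" "C \<ge> 0" and ab: "a \<le> b" "b \<le> b'"
  shows "pos_integral {a..b'} g \<le> pos_integral {a..b} g + ennreal (C * (b' - b))"
proof -
  have "pos_integral {a..b'} g \<le> (\<integral>\<^sup>+ \<tau>. ennreal (G \<tau>) * indicator {a..b} \<tau> + ennreal C * indicator {b..b'} \<tau> \<partial>lborel)"
    unfolding pos_integral_def
  proof (intro nn_integral_mono)
    fix \<tau> show "ennreal (g \<tau>) * indicator {a..b'} \<tau> \<le> ennreal (G \<tau>) * indicator {a..b} \<tau> + ennreal C * indicator {b..b'} \<tau>"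
      using G C by (cases "\<tau> \<in> {a..b}"; cases "\<tau> \<in> {b..b'}") (auto simp: indicator_def ennreal_leI)
  qed
  also have "\<dots> = (\<integral>\<^sup>+ \<tau>. ennreal (G \<tau>) * indicator {a..b} \<tau> \<partial>lborel) + (\<integral>\<^sup>+ \<tau>. ennreal C * indicator {b..b'} \<tau> \<partial>lborel)"
    using G by (intro nn_integral_add) auto
  also have "(\<integral>\<^sup>+ \<tau>. ennreal (G \<tau>) * indicator {a..b} \<tau> \<partial>lborel) = pos_integral {a..b} g"
    unfolding pos_integral_def using G by (intro nn_integral_cong) (auto simp: indicator_def)
  also have "(\<integral>\<^sup>+ \<tau>. ennreal C * indicator {b..b'} \<tau> \<partial>lborel) = ennreal (C * (b' - b))"
    using ab C by (simp add: nn_integral_cmult_indicator ennreal_mult)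
  finally show ?thesis .
qed

lemma ereal_diff_extend:
  fixes P P' N N' :: ereal and c :: real
  assumes "0 \<le> P" "0 \<le> N" "P \<le> P'" "N' \<le> N + ereal c"
  shows "P - N - ereal c \<le> P' - N'" and "N' - P' \<le> N - P + ereal c"
  using assms by (cases P; cases P'; cases N; cases N'; simp)+

lemma enn2ereal_add_ennreal: "0 \<le> c \<Longrightarrow> enn2ereal (a + ennreal c) = enn2ereal a + ereal c"
  by (simp add: plus_ennreal.rep_eq)

lemma eint_extend_lower:
  assumes G: "G \<in> borel_measurable lborel" "\<forall>\<tau>\<in>{a..b}. G \<tau> = g \<tau>"
    and C: "\<forall>\<tau>\<in>{b..b'}. - C \<le> g \<tau>" "C \<ge> 0" and ab: "a \<le> b" "b \<le> b'"
  shows "eint {a..b} g - ereal (C * (b' - b)) \<le> eint {a..b'} g"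
proof -
  have "pos_integral {a..b'} (\<lambda>\<tau>. - g \<tau>) \<le> pos_integral {a..b} (\<lambda>\<tau>. - g \<tau>) + ennreal (C * (b' - b))"
    by (rule pos_integral_extend_le[of "\<lambda>\<tau>. - G \<tau>"]) (use G C ab in auto)
  moreover have "pos_integral {a..b} g \<le> pos_integral {a..b'} g" using ab by (intro pos_integral_mono_set) auto
  ultimately show ?thesis
    unfolding eint_pos_integral using C ab
    by (intro ereal_diff_extend(1)) (auto simp: less_eq_ennreal.rep_eq enn2ereal_add_ennreal[symmetric])
qed

lemma eint_extend_upper:
  assumes G: "G \<in> borel_measurable lborel" "\<forall>\<tau>\<in>{a..b}. G \<tau> = g \<tau>"
    and C: "\<forall>\<tau>\<in>{b..b'}. g \<tau> \<le> C" "C \<ge> 0" and ab: "a \<le> b" "b \<le> b'"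
  shows "eint {a..b'} g \<le> eint {a..b} g + ereal (C * (b' - b))"
proof -
  have "pos_integral {a..b'} g \<le> pos_integral {a..b} g + ennreal (C * (b' - b))"
    by (rule pos_integral_extend_le[OF G C ab])
  moreover have "pos_integral {a..b} (\<lambda>\<tau>. - g \<tau>) \<le> pos_integral {a..b'} (\<lambda>\<tau>. - g \<tau>)"
    using ab by (intro pos_integral_mono_set) auto
  ultimately show ?thesis
    unfolding eint_pos_integral using C ab
    by (intro ereal_diff_extend(2)) (auto simp: less_eq_ennreal.rep_eq enn2ereal_add_ennreal[symmetric])
qed

lemma ereal_sub_super_difference:
  fixes Ju Jv Bu Bv Hu Hv c D :: real and Eu Ev :: ereal
  assumes S1: "ereal Ju + (ereal Bu + ereal c * Eu) + ereal Hu \<le> 0"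
    and S2: "ereal Jv + (ereal Bv + ereal c * Ev) + ereal Hv \<ge> 0"
    and E: "Ev - ereal D \<le> Eu" and c: "c > 0"
  shows "Ju - Jv + Bu - Bv - c*D + Hu - Hv \<le> 0"
proof -
  have "Eu \<noteq> \<infinity>" using S1 c by auto
  moreover have "Ev \<noteq> -\<infinity>" using S2 c by auto
  ultimately obtain eu ev where eu: "Eu = ereal eu" and ev: "Ev = ereal ev"
    using E by (cases Eu; cases Ev) auto
  have "ev \<le> D + eu" using E unfolding eu ev by simp
  hence "c * ev \<le> c * (D + eu)" using c by (intro mult_left_mono) auto
  with S1 S2 show ?thesis unfolding eu ev using c
    by (simp add: algebra_simps)
qed


lemma caputo_tail_extend_lower:
  fixes f :: "real \<Rightarrow> real^'d \<Rightarrow> real"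
  assumes alpha: "0 < \<alpha>" and usc: "usc_on ({0..T} \<times> UNIV) (\<lambda>p. f (fst p) (snd p))"
    and f_le: "\<forall>t\<in>{0..T}. \<forall>x. f t x \<le> M" and C: "M - f t x \<le> C"
    and r: "0 < r" "r \<le> s" "s \<le> t" "t \<le> T"
  shows "eint {r..s} (\<lambda>\<tau>. (f t x - f (t-\<tau>) x) * \<tau> powr (-\<alpha>-1)) - ereal (C * s powr (-\<alpha>-1) * (t - s))
    \<le> eint {r..t} (\<lambda>\<tau>. (f t x - f (t-\<tau>) x) * \<tau> powr (-\<alpha>-1))"
proof -
  have "f t x \<le> M" using f_le r by auto
  with C have C0: "0 \<le> C" by linarith
  obtain G where G: "G \<in> borel_measurable lborel" "\<forall>\<tau>\<in>{r..s}. G \<tau> = f (t - \<tau>) x"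
    using usc_slice_measurable[OF usc, of r s t x] r by auto
  have "(\<lambda>\<tau>. (f t x - G \<tau>) * \<tau> powr (-\<alpha>-1)) \<in> borel_measurable lborel"
    by (intro borel_measurable_times borel_measurable_diff borel_measurable_const powr_real_measurable G(1)) auto
  moreover have "\<forall>\<tau>\<in>{s..t}. - (C * s powr (-\<alpha>-1)) \<le> (f t x - f (t-\<tau>) x) * \<tau> powr (-\<alpha>-1)"
  proof
    fix \<tau> assume \<tau>: "\<tau> \<in> {s..t}"
    have "f (t-\<tau>) x \<le> M" using f_le \<tau> r by auto
    with C have lower: "- C \<le> f t x - f (t-\<tau>) x" by linarith
    have "- (C * s powr (-\<alpha>-1)) = (- C) * s powr (-\<alpha>-1)" by simp
    also have "\<dots> \<le> (- C) * \<tau> powr (-\<alpha>-1)"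
      using C0 \<tau> r alpha by (intro mult_left_mono_neg powr_mono2') auto
    also have "\<dots> \<le> (f t x - f (t-\<tau>) x) * \<tau> powr (-\<alpha>-1)" using lower by (intro mult_right_mono) auto
    finally show "- (C * s powr (-\<alpha>-1)) \<le> (f t x - f (t-\<tau>) x) * \<tau> powr (-\<alpha>-1)" .
  qed
  ultimately show ?thesis
    using C0 r by (intro eint_extend_lower[where G="\<lambda>\<tau>. (f t x - G \<tau>) * \<tau> powr (-\<alpha>-1)"]) (auto simp: G(2))
qed

lemma caputo_tail_extend_upper:
  fixes f :: "real \<Rightarrow> real^'d \<Rightarrow> real"
  assumes alpha: "0 < \<alpha>" and lsc: "lsc_on ({0..T} \<times> UNIV) (\<lambda>p. f (fst p) (snd p))"
    and f_ge: "\<forall>t\<in>{0..T}. \<forall>x. m \<le> f t x" and C: "f s y - m \<le> C"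
    and r: "0 < r" "r \<le> t" "t \<le> s" "s \<le> T"
  shows "eint {r..s} (\<lambda>\<tau>. (f s y - f (s-\<tau>) y) * \<tau> powr (-\<alpha>-1))
    \<le> eint {r..t} (\<lambda>\<tau>. (f s y - f (s-\<tau>) y) * \<tau> powr (-\<alpha>-1)) + ereal (C * t powr (-\<alpha>-1) * (s - t))"
proof -
  have "m \<le> f s y" using f_ge r by auto
  with C have C0: "0 \<le> C" by linarith
  have "usc_on ({0..T} \<times> UNIV) (\<lambda>p. - f (fst p) (snd p))" using lsc by (simp add: lsc_on_iff_usc_on_uminus)
  then obtain G where G: "G \<in> borel_measurable lborel" "\<forall>\<tau>\<in>{r..t}. G \<tau> = - f (s - \<tau>) y"
    using usc_slice_measurable[of T "\<lambda>t x. - f t x", of r t s y] r by auto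
  have "(\<lambda>\<tau>. (f s y + G \<tau>) * \<tau> powr (-\<alpha>-1)) \<in> borel_measurable lborel"
    by (intro borel_measurable_times borel_measurable_add borel_measurable_const powr_real_measurable G(1)) auto
  moreover have "\<forall>\<tau>\<in>{t..s}. (f s y - f (s-\<tau>) y) * \<tau> powr (-\<alpha>-1) \<le> C * t powr (-\<alpha>-1)"
  proof
    fix \<tau> assume \<tau>: "\<tau> \<in> {t..s}"
    have "m \<le> f (s-\<tau>) y" using f_ge \<tau> r by auto
    with C have upper: "f s y - f (s-\<tau>) y \<le> C" by linarith
    have "(f s y - f (s-\<tau>) y) * \<tau> powr (-\<alpha>-1) \<le> C * \<tau> powr (-\<alpha>-1)"
      using upper by (intro mult_right_mono) auto
    also have "\<dots> \<le> C * t powr (-\<alpha>-1)" using C0 \<tau> r alpha by (intro mult_left_mono powr_mono2') auto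
    finally show "(f s y - f (s-\<tau>) y) * \<tau> powr (-\<alpha>-1) \<le> C * t powr (-\<alpha>-1)" .
  qed
  ultimately show ?thesis
    using C0 r by (intro eint_extend_upper[where G="\<lambda>\<tau>. (f s y + G \<tau>) * \<tau> powr (-\<alpha>-1)"]) (auto simp: G(2))
qed

(* Maximality under the joint time shift compares the two memory integrals on their common range;
   the rest of the longer range has length |t - s| and is bounded through the oscillation Mu - mv. *)
lemma K_integral_shift_compare:
  fixes \<alpha> T r Mu mv t s :: real and u v :: "real \<Rightarrow> real^'d \<Rightarrow> real" and x y :: "real^'d"
  assumes alpha: "0 < \<alpha>"
    and usc: "usc_on ({0..T} \<times> UNIV) (\<lambda>p. u (fst p) (snd p))"
    and lsc: "lsc_on ({0..T} \<times> UNIV) (\<lambda>p. v (fst p) (snd p))"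
    and u_le: "\<forall>t\<in>{0..T}. \<forall>x. u t x \<le> Mu" and v_ge: "\<forall>t\<in>{0..T}. \<forall>x. mv \<le> v t x"
    and ts: "t \<le> T" "s \<le> T" and r: "0 < r" "r \<le> t" "r \<le> s"
    and UV: "v s y \<le> u t x"
    and shift: "\<forall>\<tau>\<in>{r..min t s}. u (t-\<tau>) x - v (s-\<tau>) y \<le> u t x - v s y"
  shows "eint {r..s} (\<lambda>\<tau>. (v s y - v (s-\<tau>) y) * \<tau> powr (-\<alpha>-1))
           - ereal ((Mu - mv) * (min t s) powr (-\<alpha>-1) * \<bar>t-s\<bar>)
         \<le> eint {r..t} (\<lambda>\<tau>. (u t x - u (t-\<tau>) x) * \<tau> powr (-\<alpha>-1))"
proof -
  have "mv \<le> v s y" "u t x \<le> Mu" using v_ge u_le ts r by auto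
  with UV have C: "Mu - u t x \<le> Mu - mv" "v s y - mv \<le> Mu - mv" by linarith+
  have "(v s y - v (s-\<tau>) y) * \<tau> powr (-\<alpha>-1) \<le> (u t x - u (t-\<tau>) x) * \<tau> powr (-\<alpha>-1)"
    if "\<tau> \<in> {r..min t s}" for \<tau>
  proof -
    have "u (t-\<tau>) x - v (s-\<tau>) y \<le> u t x - v s y" using shift that by blast
    with that r show ?thesis by (intro mult_right_mono) auto
  qed
  then have shifted: "eint {r..min t s} (\<lambda>\<tau>. (v s y - v (s-\<tau>) y) * \<tau> powr (-\<alpha>-1))
      \<le> eint {r..min t s} (\<lambda>\<tau>. (u t x - u (t-\<tau>) x) * \<tau> powr (-\<alpha>-1))"
    by (rule eint_mono)
  show ?thesis
  proof (cases "s \<le> t")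
    case True
    with shifted caputo_tail_extend_lower[OF alpha usc u_le C(1) r(1,3) True ts(1)]
    show ?thesis by (auto simp: min_absorb2 intro: order_trans ereal_minus_mono)
  next
    case False
    then have "eint {r..s} (\<lambda>\<tau>. (v s y - v (s-\<tau>) y) * \<tau> powr (-\<alpha>-1))
        \<le> eint {r..t} (\<lambda>\<tau>. (v s y - v (s-\<tau>) y) * \<tau> powr (-\<alpha>-1)) + ereal ((Mu - mv) * t powr (-\<alpha>-1) * (s - t))"
      using caputo_tail_extend_upper[OF alpha lsc v_ge C(2) r(1,2) _ ts(2)] by simp
    also have "\<dots> \<le> eint {r..t} (\<lambda>\<tau>. (u t x - u (t-\<tau>) x) * \<tau> powr (-\<alpha>-1)) + ereal ((Mu - mv) * t powr (-\<alpha>-1) * (s - t))"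
      using shifted False by (intro add_right_mono) (simp add: min_absorb1)
    finally show ?thesis using False by (simp add: min_absorb1 ereal_minus_le_iff add.commute)
  qed
qed

lemma J_op_quadratic_bound:
  fixes \<alpha> r A B s t :: real and y x :: "real^'d"
  assumes alpha: "0<\<alpha>" "\<alpha><1" and r: "0 < r"
  shows "\<bar>J_op \<alpha> r (\<lambda>t' x'. A*((x'-y)\<bullet>(x'-y)) + B*(t'-s)^2) t x\<bar>
     \<le> \<alpha>/Gamma(1-\<alpha>) * (\<bar>B\<bar>*(2*\<bar>t-s\<bar>+r) * (r powr (1-\<alpha>) / (1-\<alpha>)))"
proof -
  have G: "Gamma (1-\<alpha>) > 0" using alpha by (intro Gamma_real_pos) simp
  have c: "\<alpha> / Gamma (1-\<alpha>) > 0" using alpha G by simp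
  have K: "\<bar>B\<bar>*(2*\<bar>t-s\<bar>+r) \<ge> 0" using r by simp
  have b: "\<bar>(B*(t-s)^2 - B*(t-\<tau>-s)^2) * \<tau> powr (-\<alpha>-1)\<bar> \<le> \<bar>B\<bar>*(2*\<bar>t-s\<bar>+r) * \<tau> powr (-\<alpha>)"
    if \<tau>: "\<tau> \<in> {0<..<r}" for \<tau>
  proof -
    have tp: "\<tau> > 0" using \<tau> by simp
    have e1: "B*(t-s)^2 - B*(t-\<tau>-s)^2 = B * (2*(t-s) - \<tau>) * \<tau>" by (simp add: power2_eq_square algebra_simps)
    have e2: "\<tau> * \<tau> powr (-\<alpha>-1) = \<tau> powr (-\<alpha>)" using tp by (simp add: powr_mult_base)
    have "\<bar>2*(t-s) - \<tau>\<bar> \<le> 2*\<bar>t-s\<bar>+r" using \<tau> abs_ge_self[of "t-s"] abs_ge_minus_self[of "t-s"] by (simp add: abs_le_iff)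
    hence "\<bar>B\<bar> * \<bar>2*(t-s) - \<tau>\<bar> \<le> \<bar>B\<bar>*(2*\<bar>t-s\<bar>+r)" by (intro mult_left_mono) auto
    hence "\<bar>B\<bar> * \<bar>2*(t-s) - \<tau>\<bar> * \<tau> powr (-\<alpha>) \<le> \<bar>B\<bar>*(2*\<bar>t-s\<bar>+r) * \<tau> powr (-\<alpha>)"
      by (intro mult_right_mono) auto
    moreover have "\<bar>(B*(t-s)^2 - B*(t-\<tau>-s)^2) * \<tau> powr (-\<alpha>-1)\<bar> = \<bar>B\<bar> * \<bar>2*(t-s) - \<tau>\<bar> * \<tau> powr (-\<alpha>)"
      unfolding e1 using tp e2[symmetric] by (simp add: abs_mult)
    ultimately show ?thesis by simp
  qed
  have "\<bar>LINT \<tau>:{0<..<r}|lborel. (B*(t-s)^2 - B*(t-\<tau>-s)^2) * \<tau> powr (-\<alpha>-1)\<bar>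
      \<le> \<bar>B\<bar>*(2*\<bar>t-s\<bar>+r) * (r powr (1-\<alpha>) / (1-\<alpha>))"
    by (rule abs_set_integral_le_powr[OF alpha _ K b]) (use r in auto)
  hence "\<alpha>/Gamma(1-\<alpha>) * \<bar>LINT \<tau>:{0<..<r}|lborel. (B*(t-s)^2 - B*(t-\<tau>-s)^2) * \<tau> powr (-\<alpha>-1)\<bar>
      \<le> \<alpha>/Gamma(1-\<alpha>) * (\<bar>B\<bar>*(2*\<bar>t-s\<bar>+r) * (r powr (1-\<alpha>) / (1-\<alpha>)))"
    using c by (intro mult_left_mono) auto
  thus ?thesis unfolding J_op_def using c alpha G by (simp add: abs_mult abs_of_pos)
qed

definition doubling_penalty :: "real \<Rightarrow> real \<Rightarrow> real \<Rightarrow> 'a::real_inner \<Rightarrow> real \<Rightarrow> 'a \<Rightarrow> real" where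
  "doubling_penalty \<epsilon> \<delta> t x s y = (1/(2*\<epsilon>))*((x-y)\<bullet>(x-y)) + (1/(2*\<delta>))*(t-s)^2"

lemma doubling_penalty_nonneg: "0 < \<epsilon> \<Longrightarrow> 0 < \<delta> \<Longrightarrow> 0 \<le> doubling_penalty \<epsilon> \<delta> t x s y"
  unfolding doubling_penalty_def by simp

lemma compact_uniformly_continuous_fst:
  fixes f :: "'a::metric_space \<times> 'b::metric_space \<Rightarrow> 'c::metric_space"
  assumes "continuous_on (I \<times> K) f" "compact I" "compact K" "0 < e"
  shows "\<exists>d>0. \<forall>t\<in>I. \<forall>s\<in>I. \<forall>z\<in>K. dist t s < d \<longrightarrow> dist (f (t, z)) (f (s, z)) < e"
proof -
  have "uniformly_continuous_on (I \<times> K) f"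
    using assms by (intro compact_uniformly_continuous compact_Times)
  then obtain d where "d > 0" "\<forall>p\<in>I \<times> K. \<forall>q\<in>I \<times> K. dist q p < d \<longrightarrow> dist (f q) (f p) < e"
    using assms(4) unfolding uniformly_continuous_on_def by blast
  then show ?thesis by (intro exI[of _ d]) (auto simp: dist_Pair_Pair dist_commute)
qed

lemma modulus_tendsto_zero:
  assumes \<omega>: "is_modulus \<omega>" and f: "(f \<longlongrightarrow> 0) F" "\<forall>\<^sub>F n in F. 0 \<le> f n"
  shows "((\<lambda>n. \<omega> (f n)) \<longlongrightarrow> 0) F"
proof (rule order_tendstoI)
  have \<omega>_nonneg: "\<omega> z \<ge> 0" if "z \<ge> 0" for z using \<omega> that unfolding is_modulus_def by blast
  have "\<forall>\<^sub>F n in F. 0 \<le> \<omega> (f n)" using f(2) by eventually_elim (rule \<omega>_nonneg)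
  then show "\<forall>\<^sub>F n in F. a < \<omega> (f n)" if "a < 0" for a
    by eventually_elim (use that in linarith)
next
  fix e :: real assume "0 < e"
  have \<omega>0: "\<omega> 0 = 0" and \<omega>_lim: "(\<omega> \<longlongrightarrow> 0) (at_right 0)" using \<omega> unfolding is_modulus_def by blast+
  have "\<forall>\<^sub>F z in at_right 0. \<omega> z < e" using \<omega>_lim \<open>0 < e\<close> by (rule order_tendstoD(2))
  then obtain b where b: "b > 0" "\<And>z. 0 < z \<Longrightarrow> z < b \<Longrightarrow> \<omega> z < e"
    unfolding eventually_at_right_field by auto
  have small: "\<omega> z < e" if "0 \<le> z" "z < b" for z
    using b \<omega>0 \<open>0 < e\<close> that by (cases "z = 0") auto
  have "\<forall>\<^sub>F n in F. f n < b" using f(1) b(1) by (rule order_tendstoD(2))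
  then show "\<forall>\<^sub>F n in F. \<omega> (f n) < e"
    using f(2) by eventually_elim (rule small)
qed

lemma initial_terms_lower_bound:
  fixes a b U V u0 v0 M m :: real
  assumes ab: "0 < a" "0 < b" and bounds: "m \<le> V" "V \<le> M" "u0 \<le> M" "m \<le> v0"
  shows "(U - V) * a - (M - m) * \<bar>a - b\<bar> - max 0 (u0 - v0) * max a b
    \<le> (U - u0) * a - (V - v0) * b"
proof (cases "b \<le> a")
  case True
  have "(m - M) * (a - b) \<le> (V - u0) * (a - b)" using True bounds by (intro mult_right_mono) auto
  moreover have "(u0 - v0) * b \<le> max 0 (u0 - v0) * max a b" using ab by (intro mult_mono) auto
  moreover have "(U - u0) * a - (V - v0) * b = (U - V) * a + (V - u0) * (a - b) - (u0 - v0) * b"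
    "(M - m) * \<bar>a - b\<bar> = - ((m - M) * (a - b))"
    using True by (simp_all add: algebra_simps)
  ultimately show ?thesis by linarith
next
  case False
  have "(m - M) * (b - a) \<le> (v0 - V) * (b - a)" using False bounds by (intro mult_right_mono) auto
  moreover have "(u0 - v0) * a \<le> max 0 (u0 - v0) * max a b" using ab by (intro mult_mono) auto
  moreover have "(U - u0) * a - (V - v0) * b = (U - V) * a + (v0 - V) * (b - a) - (u0 - v0) * a"
    "(M - m) * \<bar>a - b\<bar> = - ((m - M) * (b - a))"
    using False by (simp_all add: algebra_simps)
  ultimately show ?thesis by linarith
qed

lemma doubling_penalty_bounds:
  fixes x y :: "'a::real_inner"
  assumes "0 < \<epsilon>" "0 < \<delta>"
  shows "norm (x - y)^2 \<le> 2*\<epsilon> * doubling_penalty \<epsilon> \<delta> t x s y"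
    and "(t - s)^2 \<le> 2*\<delta> * doubling_penalty \<epsilon> \<delta> t x s y"
proof -
  define I where "I = (x - y) \<bullet> (x - y)"
  have "0 \<le> I" "norm (x - y)^2 = I" unfolding I_def by (simp_all add: power2_norm_eq_inner)
  with assms show "norm (x - y)^2 \<le> 2*\<epsilon> * doubling_penalty \<epsilon> \<delta> t x s y"
    and "(t - s)^2 \<le> 2*\<delta> * doubling_penalty \<epsilon> \<delta> t x s y"
    unfolding doubling_penalty_def I_def[symmetric] by (simp_all add: field_simps)
qed

lemma doubling_gradient_bound:
  fixes x y :: "'a::real_inner"
  assumes ed: "0 < \<epsilon>" "0 < \<delta>"
  shows "norm (x - y) * (1 + norm ((1/\<epsilon>) *\<^sub>R (x - y)))
    \<le> sqrt (2 * \<epsilon> * doubling_penalty \<epsilon> \<delta> t x s y) + 2 * doubling_penalty \<epsilon> \<delta> t x s y"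
proof -
  have sq: "norm (x - y)^2 \<le> 2 * \<epsilon> * doubling_penalty \<epsilon> \<delta> t x s y" by (rule doubling_penalty_bounds(1)[OF ed])
  have "norm ((1/\<epsilon>) *\<^sub>R (x - y)) = norm (x - y) / \<epsilon>" unfolding norm_scaleR using ed by simp
  then have "norm (x - y) * (1 + norm ((1/\<epsilon>) *\<^sub>R (x - y))) = norm (x - y) + norm (x - y)^2 / \<epsilon>"
    by (simp add: power2_eq_square distrib_left)
  also have "\<dots> \<le> sqrt (2 * \<epsilon> * doubling_penalty \<epsilon> \<delta> t x s y) + 2 * doubling_penalty \<epsilon> \<delta> t x s y"
    using sq ed by (intro add_mono real_le_rsqrt) (simp_all add: divide_le_eq algebra_simps)
  finally show ?thesis .
qed

lemma tendsto_zero_if_eventually_less: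
  fixes f :: "'a \<Rightarrow> real"
  assumes "\<And>n. 0 \<le> f n" "\<And>\<eta>. 0 < \<eta> \<Longrightarrow> \<forall>\<^sub>F n in F. f n < \<eta>"
  shows "(f \<longlongrightarrow> 0) F"
proof (rule order_tendstoI)
  show "\<forall>\<^sub>F n in F. a < f n" if "a < 0" for a
    by (rule always_eventually) (use assms(1) that in \<open>auto intro: less_le_trans\<close>)
qed (rule assms(2))

lemma nonpos_if_bounded_by_powr:
  fixes L K b r0 :: real
  assumes b: "0 < b" and r0: "0 < r0" and bound: "\<And>r. 0 < r \<Longrightarrow> r \<le> r0 \<Longrightarrow> L \<le> K * r powr b"
  shows "L \<le> 0"
proof -
  have ev: "\<forall>\<^sub>F r in at_right 0. L \<le> K * r powr b"
    unfolding eventually_at_right_field using r0 bound by (intro exI[of _ r0]) auto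
  have "((\<lambda>r. r powr b) \<longlongrightarrow> 0) (at_right 0)"
    by (rule tendsto_zero_powrI[OF tendsto_ident_at tendsto_const])
      (use b in \<open>auto simp: eventually_at_right_less eventually_at_filter\<close>)
  then have "((\<lambda>r. K * r powr b) \<longlongrightarrow> 0) (at_right 0)" using tendsto_mult_right_zero by blast
  from tendsto_lowerbound[OF this ev trivial_limit_at_right_real] show ?thesis .
qed

section \<open>Doubling of variables\<close>

locale comparison_setting =
  fixes \<alpha> T :: real
    and H :: "real \<Rightarrow> real^'d \<Rightarrow> real \<Rightarrow> real^'d \<Rightarrow> real"
    and u v :: "real \<Rightarrow> real^'d \<Rightarrow> real"
    and \<omega> :: "real \<Rightarrow> real"
    and Mu mv :: real
  assumes alpha: "0 < \<alpha>" "\<alpha> < 1"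
    and T_pos: "0 < T"
    and H_cont: "continuous_on ({0..T} \<times> UNIV \<times> UNIV \<times> UNIV) (\<lambda>(t, x, r, p). H t x r p)"
    and modulus: "is_modulus \<omega>"
    and H_modulus: "\<forall>t\<in>{0..T}. \<forall>x y r p. \<bar>H t x r p - H t y r p\<bar> \<le> \<omega> (norm (x - y) * (1 + norm p))"
    and H_mono: "\<forall>t x p. mono (\<lambda>r. H t x r p)"
    and u_per: "periodic_x u" and v_per: "periodic_x v"
    and sub: "visc_sub \<alpha> T H u" and super: "visc_super \<alpha> T H v"
    and u_le: "\<forall>t\<in>{0..T}. \<forall>x. u t x \<le> Mu" and v_ge: "\<forall>t\<in>{0..T}. \<forall>x. mv \<le> v t x"
begin

definition is_doubled_max :: "real \<Rightarrow> real \<Rightarrow> real \<Rightarrow> real^'d \<Rightarrow> real \<Rightarrow> real^'d \<Rightarrow> bool" where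
  "is_doubled_max \<epsilon> \<delta> t x s y \<longleftrightarrow> t \<in> {0..T} \<and> s \<in> {0..T} \<and>
     (\<forall>t'\<in>{0..T}. \<forall>x'. \<forall>s'\<in>{0..T}. \<forall>y'.
        u t' x' - v s' y' - doubling_penalty \<epsilon> \<delta> t' x' s' y' \<le> u t x - v s y - doubling_penalty \<epsilon> \<delta> t x s y)"

lemma Gamma_pos: "0 < Gamma (1 - \<alpha>)"
  using alpha by (intro Gamma_real_pos) simp

lemma u_usc: "usc_on ({0..T} \<times> UNIV) (\<lambda>p. u (fst p) (snd p))"
  using sub unfolding visc_sub_def by blast

lemma v_lsc: "lsc_on ({0..T} \<times> UNIV) (\<lambda>p. v (fst p) (snd p))"
  using super unfolding visc_super_def by blast

lemma minus_v_usc: "usc_on ({0..T} \<times> UNIV) (\<lambda>p. - v (fst p) (snd p))"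
  using v_lsc unfolding lsc_on_iff_usc_on_uminus .

lemma doubled_max_le:
  assumes "is_doubled_max \<epsilon> \<delta> t x s y" "t' \<in> {0..T}" "s' \<in> {0..T}"
  shows "u t' x' - v s' y' - doubling_penalty \<epsilon> \<delta> t' x' s' y' \<le> u t x - v s y - doubling_penalty \<epsilon> \<delta> t x s y"
  using assms unfolding is_doubled_max_def by blast

lemma doubled_max_sub_test:
  assumes max: "is_doubled_max \<epsilon> \<delta> t x s y" and ed: "0 < \<epsilon>" and r: "0 < r" "r \<le> t"
  shows "ereal (J_op \<alpha> r (\<lambda>t' x'. (1/(2*\<epsilon>))*((x'-y)\<bullet>(x'-y)) + (1/(2*\<delta>))*(t'-s)^2) t x)
       + K_op \<alpha> r u t x + ereal (H t x (u t x) ((1/\<epsilon>) *\<^sub>R (x-y))) \<le> 0"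
proof -
  define \<phi> where "\<phi> = (\<lambda>t' x'. (1/(2*\<epsilon>))*((x'-y)\<bullet>(x'-y)) + (1/(2*\<delta>))*(t'-s)^2)"
  have ts: "t \<le> T" "s \<in> {0..T}" using max by (auto simp: is_doubled_max_def)
  have touch: "\<forall>t'\<in>{t-r..t}. \<forall>x'\<in>cball x 1. u t' x' - \<phi> t' x' \<le> u t x - \<phi> t x"
  proof (intro ballI)
    fix t' x' assume "t' \<in> {t-r..t}"
    then have "t' \<in> {0..T}" using r ts by auto
    from doubled_max_le[OF max this ts(2), of x' y]
    show "u t' x' - \<phi> t' x' \<le> u t x - \<phi> t x" unfolding \<phi>_def doubling_penalty_def by linarith
  qed
  have "C1_test T \<phi> (\<lambda>t' x'. 2*(1/(2*\<delta>))*(t'-s)) (\<lambda>t' x'. (2*(1/(2*\<epsilon>))) *\<^sub>R (x'-y))"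
    unfolding \<phi>_def by (rule C1_test_quadratic)
  moreover have "(2*(1/(2*\<epsilon>))) *\<^sub>R (x-y) = (1/\<epsilon>) *\<^sub>R (x-y)" using ed by simp
  ultimately show ?thesis
    using sub[unfolded visc_sub_def, THEN conjunct2, rule_format,
        of "t-r" t 1 \<phi> "\<lambda>t' x'. 2*(1/(2*\<delta>))*(t'-s)" "\<lambda>t' x'. (2*(1/(2*\<epsilon>))) *\<^sub>R (x'-y)" t x x]
      r ts touch unfolding \<phi>_def by simp
qed

lemma doubled_max_super_test:
  assumes max: "is_doubled_max \<epsilon> \<delta> t x s y" and ed: "0 < \<epsilon>" and r: "0 < r" "r \<le> s"
  shows "ereal (J_op \<alpha> r (\<lambda>s' y'. (-1/(2*\<epsilon>))*((y'-x)\<bullet>(y'-x)) + (-1/(2*\<delta>))*(s'-t)^2) s y)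
       + K_op \<alpha> r v s y + ereal (H s y (v s y) ((1/\<epsilon>) *\<^sub>R (x-y))) \<ge> 0"
proof -
  define \<psi> where "\<psi> = (\<lambda>s' y'. (-1/(2*\<epsilon>))*((y'-x)\<bullet>(y'-x)) + (-1/(2*\<delta>))*(s'-t)^2)"
  have ts: "s \<le> T" "t \<in> {0..T}" using max by (auto simp: is_doubled_max_def)
  have touch: "\<forall>s'\<in>{s-r..s}. \<forall>y'\<in>cball y 1. v s y - \<psi> s y \<le> v s' y' - \<psi> s' y'"
  proof (intro ballI)
    fix s' y' assume "s' \<in> {s-r..s}"
    then have "s' \<in> {0..T}" using r ts by auto
    moreover have "(x-y')\<bullet>(x-y') = (y'-x)\<bullet>(y'-x)" "(x-y)\<bullet>(x-y) = (y-x)\<bullet>(y-x)"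
      "(t-s')^2 = (s'-t)^2" "(t-s)^2 = (s-t)^2"
      by (simp_all add: inner_commute inner_diff_left inner_diff_right power2_commute)
    ultimately show "v s y - \<psi> s y \<le> v s' y' - \<psi> s' y'"
      using doubled_max_le[OF max ts(2), of s' x y'] unfolding \<psi>_def doubling_penalty_def by simp
  qed
  have "C1_test T \<psi> (\<lambda>t' x'. 2*(-1/(2*\<delta>))*(t'-t)) (\<lambda>t' x'. (2*(-1/(2*\<epsilon>))) *\<^sub>R (x'-x))"
    unfolding \<psi>_def by (rule C1_test_quadratic)
  moreover have "(2*(-1/(2*\<epsilon>))) *\<^sub>R (y-x) = (1/\<epsilon>) *\<^sub>R (x-y)" using ed by (simp add: algebra_simps)
  ultimately show ?thesis
    using super[unfolded visc_super_def, THEN conjunct2, rule_format,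
        of "s-r" s 1 \<psi> "\<lambda>t' x'. 2*(-1/(2*\<delta>))*(t'-t)" "\<lambda>t' x'. (2*(-1/(2*\<epsilon>))) *\<^sub>R (x'-x)" s y y]
      r ts touch unfolding \<psi>_def by simp
qed

lemma doubled_max_time_shift:
  assumes max: "is_doubled_max \<epsilon> \<delta> t x s y" and \<tau>: "0 \<le> \<tau>" "\<tau> \<le> t" "\<tau> \<le> s"
  shows "u (t-\<tau>) x - v (s-\<tau>) y \<le> u t x - v s y"
proof -
  have "t - \<tau> \<in> {0..T}" "s - \<tau> \<in> {0..T}" using max \<tau> by (auto simp: is_doubled_max_def)
  from doubled_max_le[OF max this, of x y] show ?thesis by (simp add: doubling_penalty_def)
qed

lemma doubled_max_viscosity:
  assumes max: "is_doubled_max \<epsilon> \<delta> t x s y" and ed: "0 < \<epsilon>"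
    and r: "0 < r" "r \<le> t" "r \<le> s" and UV: "v s y \<le> u t x"
  shows "J_op \<alpha> r (\<lambda>t' x'. (1/(2*\<epsilon>))*((x'-y)\<bullet>(x'-y)) + (1/(2*\<delta>))*(t'-s)^2) t x
       - J_op \<alpha> r (\<lambda>s' y'. (-1/(2*\<epsilon>))*((y'-x)\<bullet>(y'-x)) + (-1/(2*\<delta>))*(s'-t)^2) s y
       + (u t x - u 0 x)/(t powr \<alpha> * Gamma(1-\<alpha>)) - (v s y - v 0 y)/(s powr \<alpha> * Gamma(1-\<alpha>))
       - \<alpha>/Gamma(1-\<alpha>) * ((Mu - mv) * (min t s) powr (-\<alpha>-1) * \<bar>t-s\<bar>)
       + H t x (u t x) ((1/\<epsilon>) *\<^sub>R (x-y)) - H s y (v s y) ((1/\<epsilon>) *\<^sub>R (x-y)) \<le> 0"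
proof -
  have ts: "t \<le> T" "s \<le> T" using max by (auto simp: is_doubled_max_def)
  have "\<forall>\<tau>\<in>{r..min t s}. u (t-\<tau>) x - v (s-\<tau>) y \<le> u t x - v s y"
    using doubled_max_time_shift[OF max] r by auto
  note K_compare = K_integral_shift_compare[OF alpha(1) u_usc v_lsc u_le v_ge ts r UV this]
  have "\<alpha> / Gamma (1-\<alpha>) > 0" using alpha Gamma_pos by simp
  from ereal_sub_super_difference[OF doubled_max_sub_test[OF max ed r(1,2), unfolded K_op_def]
      doubled_max_super_test[OF max ed r(1,3), unfolded K_op_def] K_compare this]
  show ?thesis by simp
qed

(* The nonlocal terms of the quadratic test functions are O(r^(1-\<alpha>)), so they disappear as r \<rightarrow> 0. *)
lemma doubled_max_inequality:
  assumes max: "is_doubled_max \<epsilon> \<delta> t x s y" and ts: "0 < t" "0 < s" and ed: "0 < \<epsilon>" "0 < \<delta>"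
    and UV: "v s y \<le> u t x"
  shows "(u t x - u 0 x)/(t powr \<alpha> * Gamma(1-\<alpha>)) - (v s y - v 0 y)/(s powr \<alpha> * Gamma(1-\<alpha>))
       - \<alpha>/Gamma(1-\<alpha>) * ((Mu - mv) * (min t s) powr (-\<alpha>-1) * \<bar>t-s\<bar>)
       + H t x (u t x) ((1/\<epsilon>) *\<^sub>R (x-y)) - H s y (v s y) ((1/\<epsilon>) *\<^sub>R (x-y)) \<le> 0"
    (is "?L \<le> 0")
proof -
  have c: "\<alpha> / Gamma (1-\<alpha>) * (1/(2*\<delta>)) / (1-\<alpha>) > 0" (is "?c > 0") using alpha ed Gamma_pos by simp
  define K where "K = ?c * (2*\<bar>t-s\<bar> + min t s)"
  have J_bound: "\<alpha>/Gamma(1-\<alpha>) * (\<bar>B\<bar>*(2*\<bar>t'-s'\<bar>+r) * (r powr (1-\<alpha>) / (1-\<alpha>))) \<le> K * r powr (1-\<alpha>)"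
    if "\<bar>B\<bar> = 1/(2*\<delta>)" "\<bar>t'-s'\<bar> = \<bar>t-s\<bar>" "r \<le> min t s" for B t' s' r
  proof -
    have "\<alpha>/Gamma(1-\<alpha>) * (\<bar>B\<bar>*(2*\<bar>t'-s'\<bar>+r) * (r powr (1-\<alpha>) / (1-\<alpha>))) = ?c * (2*\<bar>t-s\<bar>+r) * r powr (1-\<alpha>)"
      using that by simp
    also have "\<dots> \<le> ?c * (2*\<bar>t-s\<bar> + min t s) * r powr (1-\<alpha>)"
      using c that(3) by (intro mult_right_mono mult_left_mono) auto
    finally show ?thesis unfolding K_def .
  qed
  have "?L \<le> (2 * K) * r powr (1-\<alpha>)" if r: "0 < r" "r \<le> min t s" for r
  proof -
    have "\<bar>J_op \<alpha> r (\<lambda>t' x'. (1/(2*\<epsilon>))*((x'-y)\<bullet>(x'-y)) + (1/(2*\<delta>))*(t'-s)^2) t x\<bar>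
        \<le> \<alpha>/Gamma(1-\<alpha>) * (\<bar>1/(2*\<delta>)\<bar>*(2*\<bar>t-s\<bar>+r) * (r powr (1-\<alpha>) / (1-\<alpha>)))"
      by (rule J_op_quadratic_bound[OF alpha r(1)])
    also have "\<dots> \<le> K * r powr (1-\<alpha>)" using ed r by (intro J_bound) auto
    finally have Ju: "\<bar>J_op \<alpha> r (\<lambda>t' x'. (1/(2*\<epsilon>))*((x'-y)\<bullet>(x'-y)) + (1/(2*\<delta>))*(t'-s)^2) t x\<bar>
        \<le> K * r powr (1-\<alpha>)" .
    have "\<bar>J_op \<alpha> r (\<lambda>s' y'. (-1/(2*\<epsilon>))*((y'-x)\<bullet>(y'-x)) + (-1/(2*\<delta>))*(s'-t)^2) s y\<bar>
        \<le> \<alpha>/Gamma(1-\<alpha>) * (\<bar>-1/(2*\<delta>)\<bar>*(2*\<bar>s-t\<bar>+r) * (r powr (1-\<alpha>) / (1-\<alpha>)))"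
      by (rule J_op_quadratic_bound[OF alpha r(1)])
    also have "\<dots> \<le> K * r powr (1-\<alpha>)" using ed r by (intro J_bound) (auto simp: abs_minus_commute)
    finally have Jv: "\<bar>J_op \<alpha> r (\<lambda>s' y'. (-1/(2*\<epsilon>))*((y'-x)\<bullet>(y'-x)) + (-1/(2*\<delta>))*(s'-t)^2) s y\<bar>
        \<le> K * r powr (1-\<alpha>)" .
    have "r \<le> t" "r \<le> s" using r by auto
    from doubled_max_viscosity[OF max ed(1) r(1) this UV] abs_le_D2[OF Ju] abs_le_D1[OF Jv]
    show ?thesis by linarith
  qed
  then show ?thesis
    using alpha ts by (intro nonpos_if_bounded_by_powr[of "1-\<alpha>" "min t s"]) auto
qed

lemma doubled_max_gap:
  assumes max: "is_doubled_max \<epsilon> \<delta> t x s y" and t0: "t0 \<in> {0..T}"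
  shows "u t0 x0 - v t0 x0 + doubling_penalty \<epsilon> \<delta> t x s y \<le> u t x - v s y"
  using max[unfolded is_doubled_max_def, THEN conjunct2, THEN conjunct2, rule_format, OF t0 t0, of x0 x0]
  by (simp add: doubling_penalty_def)

definition doubling_error :: "real \<Rightarrow> real \<Rightarrow> real^'d \<Rightarrow> real \<Rightarrow> real^'d \<Rightarrow> real" where
  "doubling_error \<epsilon> t x s y =
     (Mu - mv) * \<bar>t powr -\<alpha> - s powr -\<alpha>\<bar> / Gamma (1-\<alpha>)
     + max 0 (u 0 x - v 0 y) * max (t powr -\<alpha>) (s powr -\<alpha>) / Gamma (1-\<alpha>)
     + \<alpha>/Gamma (1-\<alpha>) * ((Mu - mv) * min t s powr (-\<alpha>-1) * \<bar>t - s\<bar>)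
     + \<bar>H t x (v s y) ((1/\<epsilon>) *\<^sub>R (x-y)) - H s x (v s y) ((1/\<epsilon>) *\<^sub>R (x-y))\<bar>
     + \<omega> (norm (x - y) * (1 + norm ((1/\<epsilon>) *\<^sub>R (x-y))))"

lemma doubled_max_initial_terms:
  assumes max: "is_doubled_max \<epsilon> \<delta> t x s y" and ts: "0 < t" "0 < s" and ed: "0 < \<epsilon>" "0 < \<delta>"
    and t0: "t0 \<in> {0..T}" and \<theta>: "v t0 x0 \<le> u t0 x0"
  shows "(u t0 x0 - v t0 x0) * t powr -\<alpha> / Gamma (1-\<alpha>) - (Mu - mv) * \<bar>t powr -\<alpha> - s powr -\<alpha>\<bar> / Gamma (1-\<alpha>)
      - max 0 (u 0 x - v 0 y) * max (t powr -\<alpha>) (s powr -\<alpha>) / Gamma (1-\<alpha>)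
    \<le> (u t x - u 0 x)/(t powr \<alpha> * Gamma(1-\<alpha>)) - (v s y - v 0 y)/(s powr \<alpha> * Gamma(1-\<alpha>))"
proof -
  define a b where "a = t powr -\<alpha>" "b = s powr -\<alpha>"
  have ab: "0 < a" "0 < b" unfolding a_b_def using ts by auto
  have tsT: "t \<in> {0..T}" "s \<in> {0..T}" using max by (auto simp: is_doubled_max_def)
  have gap: "u t0 x0 - v t0 x0 \<le> u t x - v s y"
    using doubled_max_gap[OF max t0, of x0] doubling_penalty_nonneg[OF ed, of t x s y] by linarith
  have "u t x \<le> Mu" "mv \<le> v s y" "u 0 x \<le> Mu" "mv \<le> v 0 y" using u_le v_ge tsT T_pos by auto
  with gap \<theta> have bounds: "mv \<le> v s y" "v s y \<le> Mu" "u 0 x \<le> Mu" "mv \<le> v 0 y" by auto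
  have "(u t0 x0 - v t0 x0) * a \<le> (u t x - v s y) * a" using gap ab by (intro mult_right_mono) auto
  then have "(u t0 x0 - v t0 x0) * a - (Mu - mv) * \<bar>a - b\<bar> - max 0 (u 0 x - v 0 y) * max a b
      \<le> (u t x - u 0 x) * a - (v s y - v 0 y) * b"
    using initial_terms_lower_bound[OF ab bounds, of "u t x"] by linarith
  then have "((u t0 x0 - v t0 x0) * a - (Mu - mv) * \<bar>a - b\<bar> - max 0 (u 0 x - v 0 y) * max a b) / Gamma (1-\<alpha>)
      \<le> ((u t x - u 0 x) * a - (v s y - v 0 y) * b) / Gamma (1-\<alpha>)"
    using Gamma_pos by (rule divide_right_mono[OF _ less_imp_le])
  then show ?thesis unfolding a_b_def by (simp add: powr_minus_divide diff_divide_distrib)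
qed

lemma doubled_max_estimate:
  assumes max: "is_doubled_max \<epsilon> \<delta> t x s y" and ts: "0 < t" "0 < s" and ed: "0 < \<epsilon>" "0 < \<delta>"
    and t0: "t0 \<in> {0..T}" and \<theta>: "v t0 x0 \<le> u t0 x0"
  shows "(u t0 x0 - v t0 x0) * t powr -\<alpha> / Gamma (1-\<alpha>) \<le> doubling_error \<epsilon> t x s y"
proof -
  define U V p where "U = u t x" "V = v s y" "p = (1/\<epsilon>) *\<^sub>R (x-y)"
  have s: "s \<in> {0..T}" using max by (auto simp: is_doubled_max_def)
  have "u t0 x0 - v t0 x0 \<le> U - V"
    using doubled_max_gap[OF max t0, of x0] doubling_penalty_nonneg[OF ed, of t x s y] unfolding U_V_p_def by linarith
  with \<theta> have VU: "V \<le> U" by linarith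
  have "H t x V p \<le> H t x U p" using monoD[OF H_mono[rule_format] VU] by simp
  moreover have "- (H s x V p - H s y V p) \<le> \<omega> (norm (x - y) * (1 + norm p))"
    by (rule abs_le_D2[OF H_modulus[rule_format, OF s]])
  moreover have "H s x V p - H t x V p \<le> \<bar>H t x V p - H s x V p\<bar>" by simp
  moreover note doubled_max_inequality[OF max ts ed VU[unfolded U_V_p_def]]
    doubled_max_initial_terms[OF max ts ed t0 \<theta>]
  ultimately show ?thesis unfolding doubling_error_def U_V_p_def by (smt (verit))
qed

lemma H_time_modulus:
  assumes "0 < e"
  shows "\<exists>d>0. \<forall>t\<in>{0..T}. \<forall>s\<in>{0..T}. \<forall>x\<in>cbox 0 1. \<forall>V\<in>{mv..Mu}. \<forall>p\<in>cball 0 R.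
           \<bar>t - s\<bar> < d \<longrightarrow> \<bar>H t x V p - H s x V p\<bar> < e"
proof -
  let ?K = "cbox (0::real^'d) 1 \<times> {mv..Mu} \<times> cball (0::real^'d) R"
  have "continuous_on ({0..T} \<times> ?K) (\<lambda>(t, x, r, p). H t x r p)"
    by (rule continuous_on_subset[OF H_cont]) auto
  moreover have "compact ?K" by (intro compact_Times) auto
  ultimately obtain d where "d > 0" "\<forall>t\<in>{0..T}. \<forall>s\<in>{0..T}. \<forall>z\<in>?K. dist t s < d \<longrightarrow>
      dist ((\<lambda>(t, x, r, p). H t x r p) (t, z)) ((\<lambda>(t, x, r, p). H t x r p) (s, z)) < e"
    using compact_uniformly_continuous_fst[OF _ compact_Icc _ assms] by blast
  then show ?thesis by (intro exI[of _ d]) (force simp: dist_real_def)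
qed

definition doubled :: "real \<Rightarrow> real \<Rightarrow> (real \<times> (real^'d)) \<times> (real \<times> (real^'d)) \<Rightarrow> real" where
  "doubled \<epsilon> \<delta> q = u (fst (fst q)) (snd (fst q)) - v (fst (snd q)) (snd (snd q))
     - doubling_penalty \<epsilon> \<delta> (fst (fst q)) (snd (fst q)) (fst (snd q)) (snd (snd q))"

(* After an integer translation x lies in the unit cube; a maximizer then has
   |x - y| \<le> sqrt (2 \<epsilon> (Mu - mv)), since otherwise the penalty exceeds the oscillation of u - v. *)
definition doubling_box :: "real \<Rightarrow> ((real \<times> (real^'d)) \<times> (real \<times> (real^'d))) set" where
  "doubling_box \<epsilon> = ({0..T} \<times> cbox 0 1) \<times> ({0..T} \<times> cball 0 (CARD('d) + sqrt (2*\<epsilon>*(Mu - mv))))"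

lemma doubled_usc: "usc_on (doubling_box \<epsilon>) (doubled \<epsilon> \<delta>)"
proof -
  have A: "usc_on (doubling_box \<epsilon>) (\<lambda>q. u (fst (fst q)) (snd (fst q)))"
    by (rule usc_on_compose[OF u_usc continuous_on_fst[OF continuous_on_id]]) (auto simp: doubling_box_def)
  have B: "usc_on (doubling_box \<epsilon>) (\<lambda>q. - v (fst (snd q)) (snd (snd q)))"
    by (rule usc_on_compose[OF minus_v_usc continuous_on_snd[OF continuous_on_id]]) (auto simp: doubling_box_def)
  have C: "usc_on (doubling_box \<epsilon>)
      (\<lambda>q. - doubling_penalty \<epsilon> \<delta> (fst (fst q)) (snd (fst q)) (fst (snd q)) (snd (snd q)))"
    unfolding doubling_penalty_def by (intro continuous_on_imp_usc_on continuous_intros)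
  show ?thesis using usc_on_add[OF usc_on_add[OF A B] C] unfolding doubled_def by simp
qed

lemma doubled_shift:
  assumes "\<forall>i. z$i \<in> \<int>"
  shows "doubled \<epsilon> \<delta> ((t, x - z), (s, y - z)) = doubled \<epsilon> \<delta> ((t, x), (s, y))"
  using periodic_x_diff[OF u_per assms] periodic_x_diff[OF v_per assms]
  by (simp add: doubled_def doubling_penalty_def)

lemma doubled_far_negative:
  assumes ts: "t \<in> {0..T}" "s \<in> {0..T}" and ed: "0 < \<epsilon>" "0 < \<delta>"
    and far: "sqrt (2*\<epsilon>*(Mu - mv)) < norm (x - y)"
  shows "doubled \<epsilon> \<delta> ((t, x), (s, y)) < 0"
proof -
  have "2*\<epsilon>*(Mu - mv) < norm (x - y)^2"
  proof (cases "0 \<le> 2*\<epsilon>*(Mu - mv)")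
    case True
    then have "2*\<epsilon>*(Mu - mv) = (sqrt (2*\<epsilon>*(Mu - mv)))^2" by simp
    also have "\<dots> < norm (x - y)^2" using far True by (intro power_strict_mono) auto
    finally show ?thesis .
  next
    case False
    have "0 \<le> norm (x - y)^2" by simp
    with False show ?thesis by linarith
  qed
  also have "\<dots> \<le> 2*\<epsilon> * doubling_penalty \<epsilon> \<delta> t x s y" by (rule doubling_penalty_bounds(1)[OF ed])
  finally have "Mu - mv < doubling_penalty \<epsilon> \<delta> t x s y" using ed by simp
  moreover have "u t x \<le> Mu" "mv \<le> v s y" using u_le v_ge ts by auto
  ultimately show ?thesis unfolding doubled_def by simp
qed

lemma doubled_le_box_max:
  assumes ts: "t \<in> {0..T}" "s \<in> {0..T}" and ed: "0 < \<epsilon>" "0 < \<delta>"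
    and q: "\<forall>q'\<in>doubling_box \<epsilon>. doubled \<epsilon> \<delta> q' \<le> doubled \<epsilon> \<delta> q" "0 \<le> doubled \<epsilon> \<delta> q"
  shows "doubled \<epsilon> \<delta> ((t, x), (s, y)) \<le> doubled \<epsilon> \<delta> q"
proof -
  obtain z where z: "\<forall>i. z$i \<in> \<int>" "x - z \<in> cbox 0 1" using unit_cube_representative by blast
  show ?thesis
  proof (cases "norm (y - z) \<le> CARD('d) + sqrt (2*\<epsilon>*(Mu - mv))")
    case True
    then have "((t, x - z), (s, y - z)) \<in> doubling_box \<epsilon>" using z(2) ts unfolding doubling_box_def by simp
    then show ?thesis using q(1) doubled_shift[OF z(1)] by metis
  next
    case False
    have "norm (y - z) \<le> norm (x - z) + norm ((x - z) - (y - z))"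
      using norm_triangle_ineq4[of "x - z" "(x - z) - (y - z)"] by simp
    moreover have "norm (x - z) \<le> CARD('d)" by (rule norm_le_card_unit_cube[OF z(2)])
    ultimately have "sqrt (2*\<epsilon>*(Mu - mv)) < norm ((x - z) - (y - z))" using False by linarith
    from doubled_far_negative[OF ts ed this] q(2) show ?thesis unfolding doubled_shift[OF z(1)] by linarith
  qed
qed

lemma doubled_max_exists:
  assumes ed: "0 < \<epsilon>" "0 < \<delta>" and t0: "t0 \<in> {0..T}" and \<theta>: "v t0 x0 \<le> u t0 x0"
  obtains t x s y where "is_doubled_max \<epsilon> \<delta> t x s y" "x \<in> cbox 0 1"
proof -
  obtain z0 where z0: "\<forall>i. z0$i \<in> \<int>" "x0 - z0 \<in> cbox 0 1" using unit_cube_representative by blast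
  have "u t0 x0 \<le> Mu" "mv \<le> v t0 x0" using u_le v_ge t0 by auto
  with \<theta> ed norm_le_card_unit_cube[OF z0(2)]
  have diag: "((t0, x0 - z0), (t0, x0 - z0)) \<in> doubling_box \<epsilon>" using t0 z0(2)
    unfolding doubling_box_def by (simp add: add_increasing2)
  have "compact (doubling_box \<epsilon>)" unfolding doubling_box_def
    by (intro compact_Times compact_Icc compact_cbox compact_cball)
  then obtain q where q: "q \<in> doubling_box \<epsilon>" "\<forall>q'\<in>doubling_box \<epsilon>. doubled \<epsilon> \<delta> q' \<le> doubled \<epsilon> \<delta> q"
    using usc_on_attains_max[OF _ _ doubled_usc] diag by blast
  have "0 \<le> doubled \<epsilon> \<delta> ((t0, x0 - z0), (t0, x0 - z0))"
    unfolding doubled_shift[OF z0(1)] using \<theta> by (simp add: doubled_def doubling_penalty_def)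
  with q(2) diag have q_nonneg: "0 \<le> doubled \<epsilon> \<delta> q" by force
  have "is_doubled_max \<epsilon> \<delta> (fst (fst q)) (snd (fst q)) (fst (snd q)) (snd (snd q))"
    unfolding is_doubled_max_def
  proof (intro conjI ballI allI)
    show "fst (fst q) \<in> {0..T}" "fst (snd q) \<in> {0..T}" using q(1) unfolding doubling_box_def by auto
    fix t' x' s' y' assume "t' \<in> {0..T}" "s' \<in> {0..T}"
    from doubled_le_box_max[OF this ed q(2) q_nonneg, of x' y'] show "u t' x' - v s' y' - doubling_penalty \<epsilon> \<delta> t' x' s' y'
      \<le> u (fst (fst q)) (snd (fst q)) - v (fst (snd q)) (snd (snd q))
        - doubling_penalty \<epsilon> \<delta> (fst (fst q)) (snd (fst q)) (fst (snd q)) (snd (snd q))"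
      unfolding doubled_def by simp
  qed
  moreover have "snd (fst q) \<in> cbox 0 1" using q(1) unfolding doubling_box_def by auto
  ultimately show ?thesis by (rule that)
qed

lemma doubled_max_bounds:
  assumes max: "is_doubled_max \<epsilon> \<delta> t x s y" and ed: "0 < \<epsilon>" "0 < \<delta>"
    and t0: "t0 \<in> {0..T}" and \<theta>: "v t0 x0 \<le> u t0 x0"
  shows "doubling_penalty \<epsilon> \<delta> t x s y \<le> Mu - mv" and "v s y \<in> {mv..Mu}"
proof -
  have "u t x \<le> Mu" "mv \<le> v s y" using max u_le v_ge by (auto simp: is_doubled_max_def)
  moreover note doubled_max_gap[OF max t0, of x0] doubling_penalty_nonneg[OF ed, of t x s y]
  ultimately show "doubling_penalty \<epsilon> \<delta> t x s y \<le> Mu - mv" "v s y \<in> {mv..Mu}"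
    using \<theta> by auto
qed

lemma doubled_max_time_gradient_bounds:
  assumes max: "is_doubled_max \<epsilon> \<delta> t x s y" and ed: "0 < \<epsilon>" "0 < \<delta>"
    and t0: "t0 \<in> {0..T}" and \<theta>: "v t0 x0 \<le> u t0 x0"
  shows "(t - s)^2 \<le> 2*\<delta>*(Mu - mv)" and "norm ((1/\<epsilon>) *\<^sub>R (x - y)) \<le> sqrt (2*(Mu - mv)/\<epsilon>)"
proof -
  note pen = doubled_max_bounds(1)[OF max ed t0 \<theta>]
  show "(t - s)^2 \<le> 2*\<delta>*(Mu - mv)"
    using doubling_penalty_bounds(2)[OF ed, of t s x y] pen ed by (smt (verit) mult_left_mono)
  have "norm ((1/\<epsilon>) *\<^sub>R (x - y))^2 = norm (x - y)^2 / \<epsilon>^2" using ed by (simp add: power_divide)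
  also have "\<dots> \<le> 2*\<epsilon>*(Mu - mv) / \<epsilon>^2"
    using doubling_penalty_bounds(1)[OF ed, of x y t s] pen ed by (intro divide_right_mono) (smt (verit) mult_left_mono, simp)
  also have "\<dots> = 2*(Mu - mv)/\<epsilon>" using ed by (simp add: power2_eq_square)
  finally show "norm ((1/\<epsilon>) *\<^sub>R (x - y)) \<le> sqrt (2*(Mu - mv)/\<epsilon>)" by (rule real_le_rsqrt)
qed

(* \<delta> is tied to \<epsilon> so that, for gradients up to sqrt (2 (Mu - mv) / \<epsilon>), H varies by less than \<epsilon>
   between the two times of a maximizer. *)
lemma doubled_max_sequence:
  assumes t0: "t0 \<in> {0..T}" and \<theta>: "v t0 x0 \<le> u t0 x0"
  obtains \<epsilon> \<delta> t :: "nat \<Rightarrow> real" and x :: "nat \<Rightarrow> real^'d" and s :: "nat \<Rightarrow> real"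
    and y :: "nat \<Rightarrow> real^'d" where
    "\<epsilon> \<longlonglongrightarrow> 0" "\<And>n. 0 < \<epsilon> n" "\<And>n. 0 < \<delta> n" "\<And>n. \<delta> n \<le> \<epsilon> n"
    "\<And>n. is_doubled_max (\<epsilon> n) (\<delta> n) (t n) (x n) (s n) (y n)" "\<And>n. x n \<in> cbox 0 1"
    "\<And>n. \<bar>H (t n) (x n) (v (s n) (y n)) ((1/\<epsilon> n) *\<^sub>R (x n - y n))
          - H (s n) (x n) (v (s n) (y n)) ((1/\<epsilon> n) *\<^sub>R (x n - y n))\<bar> < \<epsilon> n"
proof -
  define C where "C = Mu - mv"
  have "u t0 x0 \<le> Mu" "mv \<le> v t0 x0" using u_le v_ge t0 by auto
  with \<theta> have C: "0 \<le> C" unfolding C_def by linarith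
  have step: "\<exists>\<delta> t x s y. 0 < \<delta> \<and> \<delta> \<le> e \<and> is_doubled_max e \<delta> t x s y \<and> x \<in> cbox 0 1 \<and>
      \<bar>H t x (v s y) ((1/e) *\<^sub>R (x - y)) - H s x (v s y) ((1/e) *\<^sub>R (x - y))\<bar> < e" if e: "0 < e" for e
  proof -
    obtain d where d: "d > 0" "\<forall>t\<in>{0..T}. \<forall>s\<in>{0..T}. \<forall>x\<in>cbox 0 1. \<forall>V\<in>{mv..Mu}.
        \<forall>p\<in>cball 0 (sqrt (2*C/e)). \<bar>t - s\<bar> < d \<longrightarrow> \<bar>H t x V p - H s x V p\<bar> < e"
      using H_time_modulus[OF e] by blast
    define \<delta> where "\<delta> = min e (d^2 / (2*(C+1)))"
    have \<delta>: "0 < \<delta>" "\<delta> \<le> e" unfolding \<delta>_def using e d(1) C by auto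
    obtain t x s y where max: "is_doubled_max e \<delta> t x s y" and x: "x \<in> cbox 0 1"
      using doubled_max_exists[OF e \<delta>(1) t0 \<theta>] by blast
    note bounds = doubled_max_time_gradient_bounds[OF max e \<delta>(1) t0 \<theta>, folded C_def]
    have "\<bar>t - s\<bar>^2 \<le> 2*\<delta>*C" using bounds(1) by simp
    also have "\<dots> \<le> 2*(d^2/(2*(C+1)))*C" unfolding \<delta>_def using C by (intro mult_right_mono) auto
    also have "\<dots> < d^2" using C d(1) by (simp add: field_simps)
    finally have "\<bar>t - s\<bar> < d" using d(1) by (simp add: power2_less_imp_less)
    moreover have "t \<in> {0..T}" "s \<in> {0..T}" using max by (auto simp: is_doubled_max_def)
    moreover have "v s y \<in> {mv..Mu}" using doubled_max_bounds(2)[OF max e \<delta>(1) t0 \<theta>] .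
    ultimately show ?thesis using d(2) bounds(2) x max \<delta> by (intro exI conjI) auto
  qed
  define \<epsilon> where "\<epsilon> = (\<lambda>n::nat. 1 / (real n + 1))"
  have \<epsilon>: "\<epsilon> \<longlonglongrightarrow> 0" "\<And>n. 0 < \<epsilon> n"
    unfolding \<epsilon>_def using LIMSEQ_inverse_real_of_nat by (simp_all add: inverse_eq_divide add.commute)
  then have "\<forall>n. \<exists>\<delta> t x s y. 0 < \<delta> \<and> \<delta> \<le> \<epsilon> n \<and> is_doubled_max (\<epsilon> n) \<delta> t x s y \<and> x \<in> cbox 0 1 \<and>
      \<bar>H t x (v s y) ((1/\<epsilon> n) *\<^sub>R (x - y)) - H s x (v s y) ((1/\<epsilon> n) *\<^sub>R (x - y))\<bar> < \<epsilon> n"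
    using step by blast
  then obtain \<delta> t x s y where "\<forall>n. 0 < \<delta> n \<and> \<delta> n \<le> \<epsilon> n \<and> is_doubled_max (\<epsilon> n) (\<delta> n) (t n) (x n) (s n) (y n)
      \<and> x n \<in> cbox 0 1 \<and> \<bar>H (t n) (x n) (v (s n) (y n)) ((1/\<epsilon> n) *\<^sub>R (x n - y n))
          - H (s n) (x n) (v (s n) (y n)) ((1/\<epsilon> n) *\<^sub>R (x n - y n))\<bar> < \<epsilon> n"
    by metis
  with \<epsilon> show ?thesis using that by blast
qed

lemma eventually_u_minus_v_less:
  assumes "(\<lambda>n. (a n, p n)) \<longlonglongrightarrow> (\<tau>, z)" "(\<lambda>n. (b n, q n)) \<longlonglongrightarrow> (\<tau>, z)"
    and "\<And>n. a n \<in> {0..T}" "\<And>n. b n \<in> {0..T}" "\<tau> \<in> {0..T}" "0 < \<eta>"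
  shows "\<forall>\<^sub>F n in sequentially. u (a n) (p n) - v (b n) (q n) < u \<tau> z - v \<tau> z + \<eta>"
proof -
  have "\<forall>\<^sub>F n in sequentially. u (a n) (p n) < u \<tau> z + \<eta>/2"
    using usc_on_sequentially[OF u_usc, of "(\<tau>, z)" "\<lambda>n. (a n, p n)" "\<eta>/2"] assms by simp
  moreover have "\<forall>\<^sub>F n in sequentially. - v (b n) (q n) < - v \<tau> z + \<eta>/2"
    using usc_on_sequentially[OF minus_v_usc, of "(\<tau>, z)" "\<lambda>n. (b n, q n)" "\<eta>/2"] assms by simp
  ultimately show ?thesis by eventually_elim simp
qed

lemma doubled_max_subsequence:
  assumes \<epsilon>: "\<epsilon> \<longlonglongrightarrow> 0" "\<And>n. 0 < \<epsilon> n" "\<And>n. 0 < \<delta> n" "\<And>n. \<delta> n \<le> \<epsilon> n"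
    and max: "\<And>n. is_doubled_max (\<epsilon> n) (\<delta> n) (t n) (x n) (s n) (y n)" and x: "\<And>n. x n \<in> cbox 0 1"
    and t0: "t0 \<in> {0..T}" and \<theta>: "v t0 x0 \<le> u t0 x0"
  obtains \<sigma> tb xb where "strict_mono \<sigma>" "tb \<in> {0..T}"
    "(\<lambda>n. (t (\<sigma> n), x (\<sigma> n))) \<longlonglongrightarrow> (tb, xb)" "(\<lambda>n. (s (\<sigma> n), y (\<sigma> n))) \<longlonglongrightarrow> (tb, xb)"
proof -
  define C where "C = Mu - mv"
  have pen: "doubling_penalty (\<epsilon> n) (\<delta> n) (t n) (x n) (s n) (y n) \<le> C" for n
    using doubled_max_bounds(1)[OF max \<epsilon>(2,3) t0 \<theta>] unfolding C_def .
  have C: "0 \<le> C"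
    using pen[of 0] doubling_penalty_nonneg[OF \<epsilon>(2)[of 0] \<epsilon>(3)[of 0], of "t 0" "x 0" "s 0" "y 0"] by linarith
  have xy: "norm (x n - y n) \<le> sqrt (2 * \<epsilon> n * C)" for n
  proof (rule real_le_rsqrt)
    show "norm (x n - y n)^2 \<le> 2 * \<epsilon> n * C"
      using doubling_penalty_bounds(1)[OF \<epsilon>(2,3)] pen[of n] \<epsilon>(2)[of n]
      by (meson dual_order.trans mult_left_mono zero_le_mult_iff zero_le_numeral less_imp_le)
  qed
  have ts: "\<bar>t n - s n\<bar> \<le> sqrt (2 * \<epsilon> n * C)" for n
  proof (rule real_le_rsqrt)
    have "(t n - s n)^2 \<le> 2 * \<delta> n * C"
      using doubling_penalty_bounds(2)[OF \<epsilon>(2,3)] pen[of n] \<epsilon>(3)[of n]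
      by (meson dual_order.trans mult_left_mono zero_le_mult_iff zero_le_numeral less_imp_le)
    also have "\<dots> \<le> 2 * \<epsilon> n * C"
      using \<epsilon>(4)[of n] C by (intro mult_right_mono) auto
    finally show "\<bar>t n - s n\<bar>^2 \<le> 2 * \<epsilon> n * C" by simp
  qed
  have "(\<lambda>n. sqrt (2 * \<epsilon> n * C)) \<longlonglongrightarrow> sqrt (2 * 0 * C)" by (intro tendsto_intros \<epsilon>(1))
  then have lim: "(\<lambda>n. sqrt (2 * \<epsilon> n * C)) \<longlonglongrightarrow> 0" by simp
  have xy0: "(\<lambda>n. x n - y n) \<longlonglongrightarrow> 0" by (rule Lim_null_comparison[OF _ lim]) (use xy in auto)
  have ts0: "(\<lambda>n. t n - s n) \<longlonglongrightarrow> 0" by (rule Lim_null_comparison[OF _ lim]) (use ts in auto)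
  have "seq_compact ({0..T} \<times> cbox (0::real^'d) 1)"
    by (intro compact_imp_seq_compact compact_Times compact_Icc compact_cbox)
  moreover have "\<forall>n. (t n, x n) \<in> {0..T} \<times> cbox 0 1" using max x by (auto simp: is_doubled_max_def)
  ultimately obtain l \<sigma> where l: "l \<in> {0..T} \<times> cbox 0 1" "strict_mono \<sigma>" "((\<lambda>n. (t n, x n)) \<circ> \<sigma>) \<longlonglongrightarrow> l"
    by (rule seq_compactE)
  obtain tb xb where l_eq: "l = (tb, xb)" by fastforce
  have tx: "(\<lambda>n. (t (\<sigma> n), x (\<sigma> n))) \<longlonglongrightarrow> (tb, xb)" using l(3) unfolding l_eq o_def .
  have "(\<lambda>n. (t (\<sigma> n), x (\<sigma> n)) - (t (\<sigma> n) - s (\<sigma> n), x (\<sigma> n) - y (\<sigma> n))) \<longlonglongrightarrow> (tb, xb) - (0, 0)"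
    using LIMSEQ_subseq_LIMSEQ[OF ts0 l(2)] LIMSEQ_subseq_LIMSEQ[OF xy0 l(2)]
    by (intro tendsto_diff tx tendsto_Pair) (simp_all add: o_def)
  then have "(\<lambda>n. (s (\<sigma> n), y (\<sigma> n))) \<longlonglongrightarrow> (tb, xb)" by simp
  with l(1,2) tx show ?thesis unfolding l_eq by (intro that) auto
qed

lemma gap_limit:
  assumes conv: "(\<lambda>n. (a n, p n)) \<longlonglongrightarrow> (\<tau>, z)" "(\<lambda>n. (b n, q n)) \<longlonglongrightarrow> (\<tau>, z)"
    and ab: "\<And>n. a n \<in> {0..T}" "\<And>n. b n \<in> {0..T}" and \<tau>: "\<tau> \<in> {0..T}"
    and gap: "\<And>n. \<theta> + P n \<le> u (a n) (p n) - v (b n) (q n)" and P: "\<And>n. 0 \<le> P n"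
    and \<theta>: "0 < \<theta>" "u \<tau> z - v \<tau> z \<le> \<theta>" and init: "\<forall>x. u 0 x \<le> v 0 x"
  shows "0 < \<tau>" and "P \<longlonglongrightarrow> 0"
proof -
  note near = eventually_u_minus_v_less[OF conv ab \<tau>]
  show "0 < \<tau>"
  proof (rule ccontr)
    assume "\<not> 0 < \<tau>"
    with \<tau> init have "u \<tau> z - v \<tau> z \<le> 0" by simp
    from near[OF \<theta>(1)] have "\<forall>\<^sub>F n in sequentially. False"
    proof eventually_elim
      case (elim n)
      with gap[of n] P[of n] \<open>u \<tau> z - v \<tau> z \<le> 0\<close> show ?case by linarith
    qed
    then show False by simp
  qed
  show "P \<longlonglongrightarrow> 0"
  proof (rule tendsto_zero_if_eventually_less[OF P])
    fix \<eta> :: real assume "0 < \<eta>"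
    from near[OF this] show "\<forall>\<^sub>F n in sequentially. P n < \<eta>"
    proof eventually_elim
      case (elim n)
      with gap[of n] \<theta>(2) show ?case by linarith
    qed
  qed
qed

lemma doubled_max_limit:
  assumes \<epsilon>: "\<epsilon> \<longlonglongrightarrow> 0" "\<And>n. 0 < \<epsilon> n" "\<And>n. 0 < \<delta> n" "\<And>n. \<delta> n \<le> \<epsilon> n"
    and max: "\<And>n. is_doubled_max (\<epsilon> n) (\<delta> n) (t n) (x n) (s n) (y n)" and x: "\<And>n. x n \<in> cbox 0 1"
    and t0: "t0 \<in> {0..T}" and \<theta>_max: "\<forall>t\<in>{0..T}. \<forall>x. u t x - v t x \<le> u t0 x0 - v t0 x0"
    and \<theta>: "v t0 x0 < u t0 x0" and init: "\<forall>x. u 0 x \<le> v 0 x"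
  obtains \<sigma> tb where "strict_mono \<sigma>" "0 < tb" "(\<lambda>n. t (\<sigma> n)) \<longlonglongrightarrow> tb" "(\<lambda>n. s (\<sigma> n)) \<longlonglongrightarrow> tb"
    "(\<lambda>n. doubling_penalty (\<epsilon> (\<sigma> n)) (\<delta> (\<sigma> n)) (t (\<sigma> n)) (x (\<sigma> n)) (s (\<sigma> n)) (y (\<sigma> n))) \<longlonglongrightarrow> 0"
    "(\<lambda>n. max 0 (u 0 (x (\<sigma> n)) - v 0 (y (\<sigma> n)))) \<longlonglongrightarrow> 0"
proof -
  obtain \<sigma> tb xb where \<sigma>: "strict_mono \<sigma>" "tb \<in> {0..T}"
    "(\<lambda>n. (t (\<sigma> n), x (\<sigma> n))) \<longlonglongrightarrow> (tb, xb)" "(\<lambda>n. (s (\<sigma> n), y (\<sigma> n))) \<longlonglongrightarrow> (tb, xb)"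
    using doubled_max_subsequence[OF \<epsilon> max x t0 less_imp_le[OF \<theta>]] by blast
  have "t (\<sigma> n) \<in> {0..T}" "s (\<sigma> n) \<in> {0..T}" for n using max by (auto simp: is_doubled_max_def)
  note limit = gap_limit[OF \<sigma>(3,4) this \<sigma>(2) doubled_max_gap[OF max t0] doubling_penalty_nonneg[OF \<epsilon>(2,3)]]
  have "0 < u t0 x0 - v t0 x0" "u tb xb - v tb xb \<le> u t0 x0 - v t0 x0" using \<theta> \<theta>_max \<sigma>(2) by auto
  note limit = limit[OF this init]
  moreover have "(\<lambda>n. max 0 (u 0 (x (\<sigma> n)) - v 0 (y (\<sigma> n)))) \<longlonglongrightarrow> 0"
  proof (rule tendsto_zero_if_eventually_less)
    fix \<eta> :: real assume "0 < \<eta>"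
    have "(\<lambda>n. (0, x (\<sigma> n))) \<longlonglongrightarrow> (0, xb)" "(\<lambda>n. (0, y (\<sigma> n))) \<longlonglongrightarrow> (0, xb)"
      using tendsto_snd[OF \<sigma>(3)] tendsto_snd[OF \<sigma>(4)] by (auto intro: tendsto_Pair)
    from eventually_u_minus_v_less[OF this _ _ _ \<open>0 < \<eta>\<close>]
    have "\<forall>\<^sub>F n in sequentially. u 0 (x (\<sigma> n)) - v 0 (y (\<sigma> n)) < u 0 xb - v 0 xb + \<eta>"
      using T_pos by simp
    then show "\<forall>\<^sub>F n in sequentially. max 0 (u 0 (x (\<sigma> n)) - v 0 (y (\<sigma> n))) < \<eta>"
    proof eventually_elim
      case (elim n)
      moreover have "u 0 xb \<le> v 0 xb" using init by simp
      ultimately show ?case using \<open>0 < \<eta>\<close> by simp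
    qed
  qed simp
  ultimately show ?thesis
    using that \<sigma>(1) tendsto_fst[OF \<sigma>(3)] tendsto_fst[OF \<sigma>(4)] by simp
qed

lemma doubling_error_tendsto_zero:
  assumes \<epsilon>: "\<epsilon> \<longlonglongrightarrow> 0" "\<And>n. 0 < \<epsilon> n" "\<And>n. 0 < \<delta> n"
    and tb: "0 < tb" "t \<longlonglongrightarrow> tb" "s \<longlonglongrightarrow> tb"
    and pen: "(\<lambda>n. doubling_penalty (\<epsilon> n) (\<delta> n) (t n) (x n) (s n) (y n)) \<longlonglongrightarrow> 0"
    and init: "(\<lambda>n. max 0 (u 0 (x n) - v 0 (y n))) \<longlonglongrightarrow> 0"
    and H_time: "\<And>n. \<bar>H (t n) (x n) (v (s n) (y n)) ((1/\<epsilon> n) *\<^sub>R (x n - y n))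
                     - H (s n) (x n) (v (s n) (y n)) ((1/\<epsilon> n) *\<^sub>R (x n - y n))\<bar> < \<epsilon> n"
  shows "(\<lambda>n. doubling_error (\<epsilon> n) (t n) (x n) (s n) (y n)) \<longlonglongrightarrow> 0"
proof -
  define P where "P n = doubling_penalty (\<epsilon> n) (\<delta> n) (t n) (x n) (s n) (y n)" for n
  have \<Gamma>: "Gamma (1-\<alpha>) \<noteq> 0" using Gamma_pos by simp
  have pt: "(\<lambda>n. t n powr -\<alpha>) \<longlonglongrightarrow> tb powr -\<alpha>" "(\<lambda>n. s n powr -\<alpha>) \<longlonglongrightarrow> tb powr -\<alpha>"
    using tb by (auto intro!: tendsto_powr)
  have "(\<lambda>n. min (t n) (s n) powr (-\<alpha>-1)) \<longlonglongrightarrow> min tb tb powr (-\<alpha>-1)"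
    using tb by (intro tendsto_powr tendsto_min) auto
  then have "(\<lambda>n. (Mu - mv) * \<bar>t n powr -\<alpha> - s n powr -\<alpha>\<bar> / Gamma (1-\<alpha>)
        + max 0 (u 0 (x n) - v 0 (y n)) * max (t n powr -\<alpha>) (s n powr -\<alpha>) / Gamma (1-\<alpha>)
        + \<alpha>/Gamma (1-\<alpha>) * ((Mu - mv) * min (t n) (s n) powr (-\<alpha>-1) * \<bar>t n - s n\<bar>))
      \<longlonglongrightarrow> (Mu - mv) * \<bar>tb powr -\<alpha> - tb powr -\<alpha>\<bar> / Gamma (1-\<alpha>)
        + 0 * max (tb powr -\<alpha>) (tb powr -\<alpha>) / Gamma (1-\<alpha>)
        + \<alpha>/Gamma (1-\<alpha>) * ((Mu - mv) * min tb tb powr (-\<alpha>-1) * \<bar>tb - tb\<bar>)"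
    by (intro tendsto_add tendsto_mult tendsto_divide tendsto_rabs tendsto_diff tendsto_max tendsto_const
        pt init tb) (use \<Gamma> in auto)
  then have time_terms: "(\<lambda>n. (Mu - mv) * \<bar>t n powr -\<alpha> - s n powr -\<alpha>\<bar> / Gamma (1-\<alpha>)
        + max 0 (u 0 (x n) - v 0 (y n)) * max (t n powr -\<alpha>) (s n powr -\<alpha>) / Gamma (1-\<alpha>)
        + \<alpha>/Gamma (1-\<alpha>) * ((Mu - mv) * min (t n) (s n) powr (-\<alpha>-1) * \<bar>t n - s n\<bar>)) \<longlonglongrightarrow> 0"
    by simp
  have H_term: "(\<lambda>n. \<bar>H (t n) (x n) (v (s n) (y n)) ((1/\<epsilon> n) *\<^sub>R (x n - y n))
      - H (s n) (x n) (v (s n) (y n)) ((1/\<epsilon> n) *\<^sub>R (x n - y n))\<bar>) \<longlonglongrightarrow> 0"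
    by (rule tendsto_sandwich[OF always_eventually always_eventually tendsto_const \<epsilon>(1)])
      (use H_time in \<open>auto intro: less_imp_le\<close>)
  have arg: "norm (x n - y n) * (1 + norm ((1/\<epsilon> n) *\<^sub>R (x n - y n))) \<le> sqrt (2 * \<epsilon> n * P n) + 2 * P n" for n
    unfolding P_def by (rule doubling_gradient_bound[OF \<epsilon>(2,3)])
  have "(\<lambda>n. sqrt (2 * \<epsilon> n * P n) + 2 * P n) \<longlonglongrightarrow> sqrt (2 * 0 * 0) + 2 * 0"
    using \<epsilon>(1) pen unfolding P_def by (intro tendsto_intros)
  then have bound: "(\<lambda>n. sqrt (2 * \<epsilon> n * P n) + 2 * P n) \<longlonglongrightarrow> 0" by simp
  have "(\<lambda>n. norm (x n - y n) * (1 + norm ((1/\<epsilon> n) *\<^sub>R (x n - y n)))) \<longlonglongrightarrow> 0"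
    by (rule tendsto_sandwich[OF always_eventually always_eventually tendsto_const bound]) (use arg in auto)
  then have \<omega>_term: "(\<lambda>n. \<omega> (norm (x n - y n) * (1 + norm ((1/\<epsilon> n) *\<^sub>R (x n - y n))))) \<longlonglongrightarrow> 0"
    by (rule modulus_tendsto_zero[OF modulus]) simp
  from tendsto_add_zero[OF tendsto_add_zero[OF time_terms H_term] \<omega>_term] show ?thesis
    unfolding doubling_error_def by (simp add: add.assoc)
qed

lemma comparison:
  assumes init: "\<forall>x. u 0 x \<le> v 0 x"
  shows "\<forall>t\<in>{0..T}. \<forall>x. u t x \<le> v t x"
proof (rule ccontr)
  assume "\<not> ?thesis"
  then obtain t1 x1 where t1: "t1 \<in> {0..T}" "v t1 x1 < u t1 x1" by (auto simp: not_le)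
  have "usc_on ({0..T} \<times> UNIV) (\<lambda>p. u (fst p) (snd p) - v (fst p) (snd p))"
    using usc_on_add[OF u_usc minus_v_usc] by simp
  moreover have "periodic_x (\<lambda>t x. u t x - v t x)" using u_per v_per unfolding periodic_x_def by simp
  ultimately obtain t0 x0 where t0: "t0 \<in> {0..T}" and \<theta>_max: "\<forall>t\<in>{0..T}. \<forall>x. u t x - v t x \<le> u t0 x0 - v t0 x0"
    using periodic_usc_attains_max[of T "\<lambda>t x. u t x - v t x"] T_pos by auto
  moreover have "u t1 x1 - v t1 x1 \<le> u t0 x0 - v t0 x0" using \<theta>_max t1(1) by blast
  ultimately have \<theta>: "v t0 x0 < u t0 x0" using t1(2) by linarith
  obtain \<epsilon> \<delta> t x s y where \<epsilon>: "\<epsilon> \<longlonglongrightarrow> 0" "\<And>n. 0 < \<epsilon> n" "\<And>n. 0 < \<delta> n" "\<And>n. \<delta> n \<le> \<epsilon> n"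
    and max: "\<And>n. is_doubled_max (\<epsilon> n) (\<delta> n) (t n) (x n) (s n) (y n)" and x: "\<And>n. x n \<in> cbox 0 1"
    and H_time: "\<And>n. \<bar>H (t n) (x n) (v (s n) (y n)) ((1/\<epsilon> n) *\<^sub>R (x n - y n))
                     - H (s n) (x n) (v (s n) (y n)) ((1/\<epsilon> n) *\<^sub>R (x n - y n))\<bar> < \<epsilon> n"
    by (rule doubled_max_sequence[OF t0 less_imp_le[OF \<theta>]], rule that)
  obtain \<sigma> tb where \<sigma>: "strict_mono \<sigma>" "0 < tb" "(\<lambda>n. t (\<sigma> n)) \<longlonglongrightarrow> tb" "(\<lambda>n. s (\<sigma> n)) \<longlonglongrightarrow> tb"
    "(\<lambda>n. doubling_penalty (\<epsilon> (\<sigma> n)) (\<delta> (\<sigma> n)) (t (\<sigma> n)) (x (\<sigma> n)) (s (\<sigma> n)) (y (\<sigma> n))) \<longlonglongrightarrow> 0"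
    "(\<lambda>n. max 0 (u 0 (x (\<sigma> n)) - v 0 (y (\<sigma> n)))) \<longlonglongrightarrow> 0"
    by (rule doubled_max_limit[OF \<epsilon> max x t0 \<theta>_max \<theta> init])
  have "(\<lambda>n. \<epsilon> (\<sigma> n)) \<longlonglongrightarrow> 0" using LIMSEQ_subseq_LIMSEQ[OF \<epsilon>(1) \<sigma>(1)] by (simp add: o_def)
  from doubling_error_tendsto_zero[OF this \<epsilon>(2) \<epsilon>(3) \<sigma>(2-6) H_time]
  have errors: "(\<lambda>n. doubling_error (\<epsilon> (\<sigma> n)) (t (\<sigma> n)) (x (\<sigma> n)) (s (\<sigma> n)) (y (\<sigma> n))) \<longlonglongrightarrow> 0" .
  have lhs: "(\<lambda>n. (u t0 x0 - v t0 x0) * t (\<sigma> n) powr -\<alpha> / Gamma (1-\<alpha>))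
      \<longlonglongrightarrow> (u t0 x0 - v t0 x0) * tb powr -\<alpha> / Gamma (1-\<alpha>)"
    using \<sigma>(2) Gamma_pos by (intro tendsto_intros \<sigma>(3)) auto
  have "\<forall>\<^sub>F n in sequentially. 0 < t (\<sigma> n) \<and> 0 < s (\<sigma> n)"
    using \<sigma>(2) by (intro eventually_conj order_tendstoD(1)[OF \<sigma>(3)] order_tendstoD(1)[OF \<sigma>(4)])
  then have "\<forall>\<^sub>F n in sequentially. (u t0 x0 - v t0 x0) * t (\<sigma> n) powr -\<alpha> / Gamma (1-\<alpha>)
      \<le> doubling_error (\<epsilon> (\<sigma> n)) (t (\<sigma> n)) (x (\<sigma> n)) (s (\<sigma> n)) (y (\<sigma> n))"
    by eventually_elim (use doubled_max_estimate[OF max _ _ \<epsilon>(2,3) t0 less_imp_le[OF \<theta>]] in blast)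
  from tendsto_le[OF trivial_limit_sequentially errors lhs this]
  have "(u t0 x0 - v t0 x0) * tb powr -\<alpha> / Gamma (1-\<alpha>) \<le> 0" .
  moreover have "0 < (u t0 x0 - v t0 x0) * tb powr -\<alpha> / Gamma (1-\<alpha>)"
    using \<theta> \<sigma>(2) Gamma_pos by simp
  ultimately show False by linarith
qed

end

theorem theorem3p1:
  fixes \<alpha> T :: real
    and H :: "real \<Rightarrow> real^'d \<Rightarrow> real \<Rightarrow> real^'d \<Rightarrow> real"
    and u v :: "real \<Rightarrow> real^'d \<Rightarrow> real"
  assumes alpha: "0 < \<alpha>" "\<alpha> < 1"
    and T: "0 < T"
    and H_per: "periodic_x H"
    and A1: "continuous_on ({0..T} \<times> UNIV \<times> UNIV \<times> UNIV) (\<lambda>(t, x, r, p). H t x r p)"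
    and A2: "\<exists>\<omega>. is_modulus \<omega> \<and> (\<forall>t\<in>{0..T}. \<forall>x y r p.
               \<bar>H t x r p - H t y r p\<bar> \<le> \<omega> (norm (x - y) * (1 + norm p)))"
    and A3: "\<forall>t x p. mono (\<lambda>r. H t x r p)"
    and u_per: "periodic_x u" and v_per: "periodic_x v"
    and sub: "visc_sub \<alpha> T H u"
    and super: "visc_super \<alpha> T H v"
    and init: "\<forall>x. u 0 x \<le> v 0 x"
  shows "\<forall>t\<in>{0..T}. \<forall>x. u t x \<le> v t x"
proof -
  obtain \<omega> where \<omega>: "is_modulus \<omega>" "\<forall>t\<in>{0..T}. \<forall>x y r p.
      \<bar>H t x r p - H t y r p\<bar> \<le> \<omega> (norm (x - y) * (1 + norm p))"
    using A2 by blast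
  have "usc_on ({0..T} \<times> UNIV) (\<lambda>p. u (fst p) (snd p))" using sub unfolding visc_sub_def by blast
  then obtain tu xu where u_max: "\<forall>t\<in>{0..T}. \<forall>x. u t x \<le> u tu xu"
    using periodic_usc_attains_max[OF _ u_per] T by fastforce
  have "usc_on ({0..T} \<times> UNIV) (\<lambda>p. - v (fst p) (snd p))"
    using super unfolding visc_super_def lsc_on_iff_usc_on_uminus by blast
  moreover have "periodic_x (\<lambda>t x. - v t x)" using v_per unfolding periodic_x_def by simp
  ultimately obtain tv xv where v_min: "\<forall>t\<in>{0..T}. \<forall>x. v tv xv \<le> v t x"
    using periodic_usc_attains_max[of T "\<lambda>t x. - v t x"] T by fastforce
  interpret comparison_setting \<alpha> T H u v \<omega> "u tu xu" "v tv xv"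
    using alpha T A1 \<omega> A3 u_per v_per sub super u_max v_min by unfold_locales
  show ?thesis using comparison init .
qed

end
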